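(* Let $b\ge 1$ be an integer and $\mathbf M$ an ergodic channel. For each $n$, let $\Lambda(n)$ be the spectral gap of the Glauber dynamics for the tree-process measure on the $n$-level $b$-ary tree. If $\inf_n\Lambda(n)>0$, then the mutual information between the root label $\sigma_\rho$ and the level-$n$ configuration $\sigma_n$ of $T_b$ decays exponentially: there exist $C,c>0$ with $I(\sigma_\rho,\sigma_n)\le C e^{-cn}$ for all $n$. In particular, the reconstruction problem for $T_b$ and $\mathbf M$ is not solvable.
   Context: Tree process on a rooted tree with root $\rho$: the root label is drawn from an initial distribution (here the stationary distribution of $\mathbf M$), and each non-root vertex $v$ with parent $v'$ receives label $j$ with probability $\mathbf M_{\sigma_{v'},j}$, independently across edges given parent labels. $T_b$ is the infinite rooted tree in which every vertex has exactly $b$ children; the $n$-level $b$-ary tree is its restriction to vertices at distance at most $n$ from $\rho$, and $\mu_n$ is the law of the tree process on it. Glauber dynamics for $\mu_n$ is the continuous-time Markov chain on configurations in which each vertex $v$, at rate $1$, has its label replaced by a fresh label drawn from the conditional law under $\mu_n$ of $\sigma_v$ given $(\sigma_w)_{w\ne v}$; it is reversible with respect to $\mu_n$, and $\Lambda(n)$ is its spectral gap. $L_n$ is the set of vertices at distance $n$ from $\rho$, $\sigma_n=(\sigma_v)_{v\in L_n}$. With $\mathbf P_n^\ell$ the conditional law of $\sigma_n$ given $\sigma_\rho=\ell$ and $D_V(P,Q)=\frac12\sum|P-Q|$, the reconstruction problem is solvable if there exist $i,j$ with $\lim_n D_V(\mathbf P_n^i,\mathbf P_n^j)>0$. *)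

theory Defs
  imports Complex_Main "HOL-Library.FuncSet"
begin

definition stochastic :: "nat \<Rightarrow> (nat \<Rightarrow> nat \<Rightarrow> real) \<Rightarrow> bool" where
  "stochastic q M \<longleftrightarrow> (\<forall>i<q. \<forall>j<q. 0 \<le> M i j) \<and> (\<forall>i<q. (\<Sum>j<q. M i j) = 1)"

fun mpow :: "nat \<Rightarrow> (nat \<Rightarrow> nat \<Rightarrow> real) \<Rightarrow> nat \<Rightarrow> nat \<Rightarrow> nat \<Rightarrow> real" where
  "mpow q M 0 = (\<lambda>i j. if i = j then 1 else 0)"
| "mpow q M (Suc k) = (\<lambda>i j. \<Sum>l<q. mpow q M k i l * M l j)"

definition irreducible_chain :: "nat \<Rightarrow> (nat \<Rightarrow> nat \<Rightarrow> real) \<Rightarrow> bool" where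
  "irreducible_chain q M \<longleftrightarrow> (\<forall>i<q. \<forall>j<q. \<exists>k. 0 < mpow q M k i j)"

definition aperiodic_chain :: "nat \<Rightarrow> (nat \<Rightarrow> nat \<Rightarrow> real) \<Rightarrow> bool" where
  "aperiodic_chain q M \<longleftrightarrow> (\<forall>i<q. Gcd {k. 0 < k \<and> 0 < mpow q M k i i} = 1)"

definition ergodic_channel :: "nat \<Rightarrow> (nat \<Rightarrow> nat \<Rightarrow> real) \<Rightarrow> bool" where
  "ergodic_channel q M \<longleftrightarrow> stochastic q M \<and> irreducible_chain q M \<and> aperiodic_chain q M"

definition stationary_dist :: "nat \<Rightarrow> (nat \<Rightarrow> nat \<Rightarrow> real) \<Rightarrow> (nat \<Rightarrow> real) \<Rightarrow> bool" where
  "stationary_dist q M p \<longleftrightarrow> (\<forall>i<q. 0 \<le> p i) \<and> (\<Sum>i<q. p i) = 1 \<and>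
     (\<forall>j<q. (\<Sum>i<q. p i * M i j) = p j)"

section \<open>The n-level b-ary tree; vertices are words over {0..<b}, root [], parent = butlast\<close>

definition tree_vertices :: "nat \<Rightarrow> nat \<Rightarrow> nat list set" where
  "tree_vertices b n = {v. length v \<le> n \<and> set v \<subseteq> {..<b}}"

definition level :: "nat \<Rightarrow> nat \<Rightarrow> nat list set" where
  "level b n = {v. length v = n \<and> set v \<subseteq> {..<b}}"

definition configs :: "nat \<Rightarrow> nat \<Rightarrow> nat \<Rightarrow> (nat list \<Rightarrow> nat) set" where
  "configs q b n = PiE (tree_vertices b n) (\<lambda>_. {..<q})"

definition tree_measure ::
  "nat \<Rightarrow> (nat \<Rightarrow> nat \<Rightarrow> real) \<Rightarrow> (nat \<Rightarrow> real) \<Rightarrow> nat \<Rightarrow> nat \<Rightarrow> (nat list \<Rightarrow> nat) \<Rightarrow> real" where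
  "tree_measure q M p b n \<sigma> =
     (if \<sigma> \<in> configs q b n
      then p (\<sigma> []) * (\<Prod>v\<in>tree_vertices b n - {[]}. M (\<sigma> (butlast v)) (\<sigma> v))
      else 0)"

text \<open>Jump rate from sigma to tau: each vertex v at rate 1 resamples its label from the
  conditional law of sigma_v given the other labels.\<close>
definition glauber_rate ::
  "nat \<Rightarrow> (nat \<Rightarrow> nat \<Rightarrow> real) \<Rightarrow> (nat \<Rightarrow> real) \<Rightarrow> nat \<Rightarrow> nat \<Rightarrow>
   (nat list \<Rightarrow> nat) \<Rightarrow> (nat list \<Rightarrow> nat) \<Rightarrow> real" where
  "glauber_rate q M p b n \<sigma> \<tau> =
     (\<Sum>v\<in>tree_vertices b n.
        if (\<forall>w. w \<noteq> v \<longrightarrow> \<sigma> w = \<tau> w)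
        then tree_measure q M p b n \<tau> / (\<Sum>a<q. tree_measure q M p b n (\<sigma>(v := a)))
        else 0)"

definition dirichlet_form ::
  "nat \<Rightarrow> (nat \<Rightarrow> nat \<Rightarrow> real) \<Rightarrow> (nat \<Rightarrow> real) \<Rightarrow> nat \<Rightarrow> nat \<Rightarrow>
   ((nat list \<Rightarrow> nat) \<Rightarrow> real) \<Rightarrow> real" where
  "dirichlet_form q M p b n f =
     (1/2) * (\<Sum>\<sigma>\<in>configs q b n. \<Sum>\<tau>\<in>configs q b n.
        tree_measure q M p b n \<sigma> * glauber_rate q M p b n \<sigma> \<tau> * (f \<sigma> - f \<tau>)^2)"

definition tm_mean ::
  "nat \<Rightarrow> (nat \<Rightarrow> nat \<Rightarrow> real) \<Rightarrow> (nat \<Rightarrow> real) \<Rightarrow> nat \<Rightarrow> nat \<Rightarrow>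
   ((nat list \<Rightarrow> nat) \<Rightarrow> real) \<Rightarrow> real" where
  "tm_mean q M p b n f = (\<Sum>\<sigma>\<in>configs q b n. tree_measure q M p b n \<sigma> * f \<sigma>)"

definition tm_variance ::
  "nat \<Rightarrow> (nat \<Rightarrow> nat \<Rightarrow> real) \<Rightarrow> (nat \<Rightarrow> real) \<Rightarrow> nat \<Rightarrow> nat \<Rightarrow>
   ((nat list \<Rightarrow> nat) \<Rightarrow> real) \<Rightarrow> real" where
  "tm_variance q M p b n f =
     (\<Sum>\<sigma>\<in>configs q b n. tree_measure q M p b n \<sigma> * (f \<sigma> - tm_mean q M p b n f)^2)"

definition spectral_gap ::
  "nat \<Rightarrow> (nat \<Rightarrow> nat \<Rightarrow> real) \<Rightarrow> (nat \<Rightarrow> real) \<Rightarrow> nat \<Rightarrow> nat \<Rightarrow> real" where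
  "spectral_gap q M p b n =
     Inf {dirichlet_form q M p b n f / tm_variance q M p b n f | f. 0 < tm_variance q M p b n f}"

definition leaf_configs :: "nat \<Rightarrow> nat \<Rightarrow> nat \<Rightarrow> (nat list \<Rightarrow> nat) set" where
  "leaf_configs q b n = PiE (level b n) (\<lambda>_. {..<q})"

definition joint_law ::
  "nat \<Rightarrow> (nat \<Rightarrow> nat \<Rightarrow> real) \<Rightarrow> (nat \<Rightarrow> real) \<Rightarrow> nat \<Rightarrow> nat \<Rightarrow> nat \<Rightarrow> (nat list \<Rightarrow> nat) \<Rightarrow> real" where
  "joint_law q M p b n i x =
     (\<Sum>\<sigma>\<in>{\<sigma>\<in>configs q b n. \<sigma> [] = i \<and> restrict \<sigma> (level b n) = x}. tree_measure q M p b n \<sigma>)"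

definition root_law ::
  "nat \<Rightarrow> (nat \<Rightarrow> nat \<Rightarrow> real) \<Rightarrow> (nat \<Rightarrow> real) \<Rightarrow> nat \<Rightarrow> nat \<Rightarrow> nat \<Rightarrow> real" where
  "root_law q M p b n i = (\<Sum>x\<in>leaf_configs q b n. joint_law q M p b n i x)"

definition leaf_law ::
  "nat \<Rightarrow> (nat \<Rightarrow> nat \<Rightarrow> real) \<Rightarrow> (nat \<Rightarrow> real) \<Rightarrow> nat \<Rightarrow> nat \<Rightarrow> (nat list \<Rightarrow> nat) \<Rightarrow> real" where
  "leaf_law q M p b n x = (\<Sum>i<q. joint_law q M p b n i x)"

definition mutual_info ::
  "nat \<Rightarrow> (nat \<Rightarrow> nat \<Rightarrow> real) \<Rightarrow> (nat \<Rightarrow> real) \<Rightarrow> nat \<Rightarrow> nat \<Rightarrow> real" where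
  "mutual_info q M p b n =
     (\<Sum>i<q. \<Sum>x\<in>leaf_configs q b n.
        (let J = joint_law q M p b n i x in
         if J = 0 then 0
         else J * ln (J / (root_law q M p b n i * leaf_law q M p b n x))))"

definition cond_leaf_law ::
  "nat \<Rightarrow> (nat \<Rightarrow> nat \<Rightarrow> real) \<Rightarrow> (nat \<Rightarrow> real) \<Rightarrow> nat \<Rightarrow> nat \<Rightarrow> nat \<Rightarrow> (nat list \<Rightarrow> nat) \<Rightarrow> real" where
  "cond_leaf_law q M p b n l x = joint_law q M p b n l x / root_law q M p b n l"

definition tv_dist ::
  "nat \<Rightarrow> (nat \<Rightarrow> nat \<Rightarrow> real) \<Rightarrow> (nat \<Rightarrow> real) \<Rightarrow> nat \<Rightarrow> nat \<Rightarrow> nat \<Rightarrow> nat \<Rightarrow> real" where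
  "tv_dist q M p b n i j =
     (1/2) * (\<Sum>x\<in>leaf_configs q b n. \<bar>cond_leaf_law q M p b n i x - cond_leaf_law q M p b n j x\<bar>)"

definition reconstruction_solvable ::
  "nat \<Rightarrow> (nat \<Rightarrow> nat \<Rightarrow> real) \<Rightarrow> (nat \<Rightarrow> real) \<Rightarrow> nat \<Rightarrow> bool" where
  "reconstruction_solvable q M p b \<longleftrightarrow>
     (\<exists>i<q. \<exists>j<q. \<exists>L>0. (\<lambda>n. tv_dist q M p b n i j) \<longlonglongrightarrow> L)"

end

theory Submission
  imports Defs
begin

text \<open>A uniform spectral gap \<open>\<lambda>\<close> is a Poincare inequality for the random-scan Gibbs
  sampler, so \<open>m\<close> Gibbs steps shrink the \<open>L\<^sup>2(\<mu>)\<close> norm of a centred function by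
  \<open>exp (- \<lambda> m / (2 |V|))\<close>. Start the sampler from a bounded function of the leaf labels and
  run it for \<open>m \<approx> \<delta> n |V|\<close> steps; its covariance with a centred function of the root label
  is then exponentially small in \<open>n\<close>. Only the update at the root changes that covariance, by
  at most the influence of the root label on the current function divided by \<open>|V|\<close>. Influence
  climbs at most one level per update, so a potential weighting level \<open>k\<close> by
  \<open>(e\<^sup>2 b)\<^sup>n\<^sup>-\<^sup>k\<close> keeps the influence of the root below \<open>2 e\<^sup>-\<^sup>n\<close> over the whole run. Taking
  for the root function an indicator and for the leaf function a sign pattern, the covariances
  become the \<open>l\<^sup>1\<close> distances between the joint law of \<open>(\<sigma>\<^sub>\<rho>, \<sigma>\<^sub>n)\<close> and the product of
  its marginals, which control the mutual information (through \<open>ln x \<le> x - 1\<close>) and the total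
  variation distances between the laws \<open>P\<^sub>n\<^sup>i\<close>.\<close>

lemma sum_PiE_insert:
  assumes "x \<notin> S" "finite S" "finite (T x)"
  shows "(\<Sum>f\<in>PiE (insert x S) T. F f) = (\<Sum>y\<in>T x. \<Sum>g\<in>PiE S T. F (g(x := y)))"
proof -
  have "(\<Sum>f\<in>PiE (insert x S) T. F f) = (\<Sum>z\<in>T x \<times> PiE S T. F ((\<lambda>(y, g). g(x := y)) z))"
    unfolding PiE_insert_eq by (subst sum.reindex) (auto simp: inj_combinator[OF assms(1)])
  also have "\<dots> = (\<Sum>y\<in>T x. \<Sum>g\<in>PiE S T. F (g(x := y)))"
    by (simp add: sum.cartesian_product case_prod_unfold)
  finally show ?thesis .
qed

lemma square_of_average_le:
  fixes x :: "'a \<Rightarrow> real"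
  assumes "finite A" "A \<noteq> {}"
  shows "((\<Sum>v\<in>A. x v) / card A)\<^sup>2 \<le> (\<Sum>v\<in>A. (x v)\<^sup>2) / card A"
proof -
  define m where "m = (\<Sum>v\<in>A. x v) / card A"
  have card_pos: "real (card A) > 0" using assms by (simp add: card_gt_0_iff)
  have "0 \<le> (\<Sum>v\<in>A. (x v - m)\<^sup>2)" by (intro sum_nonneg) simp
  also have "\<dots> = (\<Sum>v\<in>A. (x v)\<^sup>2) - 2 * m * (\<Sum>v\<in>A. x v) + card A * m\<^sup>2"
    by (simp add: power2_diff sum.distrib sum_subtractf sum_distrib_left sum_distrib_right mult_ac)
  also have "(\<Sum>v\<in>A. x v) = card A * m" unfolding m_def using card_pos by simp
  finally have "card A * m\<^sup>2 \<le> (\<Sum>v\<in>A. (x v)\<^sup>2)" by (simp add: power2_eq_square algebra_simps)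
  then show ?thesis using card_pos unfolding m_def[symmetric] by (simp add: field_simps)
qed

lemma ex_leaf:
  assumes "finite W" "W - {[]} \<noteq> {}"
  obtains w where "w \<in> W" "w \<noteq> []" "\<And>u. u \<in> W \<Longrightarrow> butlast u \<noteq> w"
proof -
  define l where "l = Max (length ` (W - {[]}))"
  have "l \<in> length ` (W - {[]})" unfolding l_def using assms by (intro Max_in) auto
  then obtain w where w: "w \<in> W" "w \<noteq> []" "length w = l" by auto
  have deepest: "length u \<le> length w" if "u \<in> W" "u \<noteq> []" for u
    using that assms(1) w(3) unfolding l_def by (auto intro: Max_ge)
  have "butlast u \<noteq> w" if u: "u \<in> W" for u
  proof
    assume "butlast u = w"
    then have "u \<noteq> []" and "length u = length w + 1" using w(2) by (cases u rule: rev_cases; auto)+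
    with deepest[OF u] show False by simp
  qed
  with w show thesis using that by blast
qed

lemma butlast_neq_self: "v \<noteq> [] \<Longrightarrow> butlast v \<noteq> v"
  by (metis append_butlast_last_id append_self_conv not_Cons_self2)

section \<open>The tree measure\<close>

definition agree_off :: "nat list \<Rightarrow> (nat list \<Rightarrow> nat) \<Rightarrow> (nat list \<Rightarrow> nat) \<Rightarrow> bool" where
  "agree_off v \<sigma> \<tau> \<longleftrightarrow> (\<forall>w. w \<noteq> v \<longrightarrow> \<sigma> w = \<tau> w)"

definition tree_adj :: "nat list \<Rightarrow> nat list \<Rightarrow> bool" where
  "tree_adj u v \<longleftrightarrow> (v \<noteq> [] \<and> u = butlast v) \<or> (u \<noteq> [] \<and> butlast u = v)"

lemma not_tree_adj_self: "\<not> tree_adj v v"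
  unfolding tree_adj_def using butlast_neq_self by metis

locale tree_process =
  fixes q b n :: nat and M :: "nat \<Rightarrow> nat \<Rightarrow> real" and p :: "nat \<Rightarrow> real"
  assumes stochastic: "stochastic q M"
    and p_nonneg: "\<And>i. i < q \<Longrightarrow> 0 \<le> p i"
    and sum_p: "(\<Sum>i<q. p i) = 1"
begin

abbreviation "V \<equiv> tree_vertices b n"
abbreviation "\<Omega> \<equiv> configs q b n"
abbreviation "\<mu> \<equiv> tree_measure q M p b n"
abbreviation "\<EE> \<equiv> tm_mean q M p b n"

lemma M_nonneg: "i < q \<Longrightarrow> j < q \<Longrightarrow> 0 \<le> M i j"
  using stochastic unfolding stochastic_def by auto

lemma sum_M_row: "i < q \<Longrightarrow> (\<Sum>j<q. M i j) = 1"
  using stochastic unfolding stochastic_def by auto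

lemma q_pos: "0 < q"
  using sum_p by (cases q) auto

lemma p_le_1: "i < q \<Longrightarrow> p i \<le> 1"
  using member_le_sum[of i "{..<q}" p] p_nonneg sum_p by auto

lemma finite_vertices: "finite V"
proof -
  have "V = {xs. set xs \<subseteq> {..<b} \<and> length xs \<le> n}" unfolding tree_vertices_def by auto
  then show ?thesis using finite_lists_length_le[of "{..<b}" n] by simp
qed

lemma Nil_in_vertices: "[] \<in> V"
  unfolding tree_vertices_def by simp

lemma butlast_in_vertices: "v \<in> V \<Longrightarrow> butlast v \<in> V"
  unfolding tree_vertices_def by (auto dest: in_set_butlastD)

lemma finite_configs: "finite \<Omega>"
  unfolding configs_def by (rule finite_PiE[OF finite_vertices]) simp

lemma configs_less: "\<sigma> \<in> \<Omega> \<Longrightarrow> v \<in> V \<Longrightarrow> \<sigma> v < q"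
  unfolding configs_def by (auto simp: PiE_iff)

lemma fun_upd_in_configs: "\<sigma> \<in> \<Omega> \<Longrightarrow> v \<in> V \<Longrightarrow> a < q \<Longrightarrow> \<sigma>(v := a) \<in> \<Omega>"
  unfolding configs_def by (auto simp: PiE_iff extensional_def)

lemma configs_nonempty: "\<Omega> \<noteq> {}"
  unfolding configs_def using q_pos by (auto simp: PiE_eq_empty_iff)

definition subtree_weight :: "nat list set \<Rightarrow> (nat list \<Rightarrow> nat) \<Rightarrow> real" where
  "subtree_weight W \<sigma> = p (\<sigma> []) * (\<Prod>w\<in>W - {[]}. M (\<sigma> (butlast w)) (\<sigma> w))"

lemma subtree_weight_insert_leaf:
  assumes "finite W" "w \<notin> W" "w \<noteq> []" "\<And>u. u \<in> W \<Longrightarrow> butlast u \<noteq> w"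
  shows "subtree_weight (insert w W) (h(w := y)) = subtree_weight W h * M (h (butlast w)) y"
proof -
  have "insert w W - {[]} = insert w (W - {[]})" using assms(3) by auto
  moreover have "(\<Prod>u\<in>W - {[]}. M ((h(w := y)) (butlast u)) ((h(w := y)) u))
      = (\<Prod>u\<in>W - {[]}. M (h (butlast u)) (h u))"
    using assms(2,4) by (intro prod.cong) auto
  ultimately show ?thesis
    using assms butlast_neq_self[OF assms(3)] by (simp add: subtree_weight_def algebra_simps)
qed

lemma sum_subtree_weight_root:
  assumes "finite W" "[] \<in> W" "\<And>w. w \<in> W \<Longrightarrow> butlast w \<in> W"
  shows "(\<Sum>\<sigma>\<in>PiE W (\<lambda>_. {..<q}). subtree_weight W \<sigma> * g (\<sigma> [])) = (\<Sum>i<q. p i * g i)"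
  using assms
proof (induction "card W" arbitrary: W rule: less_induct)
  case less
  show ?case
  proof (cases "W - {[]} = {}")
    case True
    then have "W = insert [] {}" using less.prems(2) by auto
    then show ?thesis by (simp add: sum_PiE_insert subtree_weight_def)
  next
    case False
    then obtain w where w: "w \<in> W" "w \<noteq> []" and leaf: "\<And>u. u \<in> W \<Longrightarrow> butlast u \<noteq> w"
      using ex_leaf less.prems(1) by blast
    define W' where "W' = W - {w}"
    have W: "W = insert w W'" "w \<notin> W'" "finite W'" using w less.prems(1) by (auto simp: W'_def)
    have parent: "butlast w \<in> W'" using less.prems(3) w leaf by (auto simp: W'_def)
    have IH: "(\<Sum>\<sigma>\<in>PiE W' (\<lambda>_. {..<q}). subtree_weight W' \<sigma> * g (\<sigma> [])) = (\<Sum>i<q. p i * g i)"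
      using less.prems leaf w(2) card_Diff1_less[OF less.prems(1) w(1)]
      by (intro less.hyps) (auto simp: W'_def)
    have "(\<Sum>\<sigma>\<in>PiE W (\<lambda>_. {..<q}). subtree_weight W \<sigma> * g (\<sigma> []))
       = (\<Sum>y<q. \<Sum>h\<in>PiE W' (\<lambda>_. {..<q}). subtree_weight W (h(w := y)) * g (h []))"
      unfolding W(1) using W w(2) by (simp add: sum_PiE_insert)
    also have "\<dots> = (\<Sum>y<q. \<Sum>h\<in>PiE W' (\<lambda>_. {..<q}). subtree_weight W' h * g (h []) * M (h (butlast w)) y)"
      unfolding W(1) using W w(2) leaf by (simp add: subtree_weight_insert_leaf mult_ac)
    also have "\<dots> = (\<Sum>h\<in>PiE W' (\<lambda>_. {..<q}). subtree_weight W' h * g (h []) * (\<Sum>y<q. M (h (butlast w)) y))"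
      by (subst sum.swap) (simp add: sum_distrib_left)
    also have "\<dots> = (\<Sum>h\<in>PiE W' (\<lambda>_. {..<q}). subtree_weight W' h * g (h []))"
      using parent by (intro sum.cong refl) (simp add: sum_M_row PiE_iff)
    finally show ?thesis using IH by simp
  qed
qed

lemma tree_measure_eq: "\<sigma> \<in> \<Omega> \<Longrightarrow> \<mu> \<sigma> = subtree_weight V \<sigma>"
  unfolding tree_measure_def subtree_weight_def by simp

lemma mean_root_function: "\<EE> (\<lambda>\<sigma>. g (\<sigma> [])) = (\<Sum>i<q. p i * g i)"
proof -
  have "\<EE> (\<lambda>\<sigma>. g (\<sigma> [])) = (\<Sum>\<sigma>\<in>\<Omega>. subtree_weight V \<sigma> * g (\<sigma> []))"
    unfolding tm_mean_def by (intro sum.cong refl) (simp add: tree_measure_eq)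
  also have "\<dots> = (\<Sum>i<q. p i * g i)"
    unfolding configs_def
    by (rule sum_subtree_weight_root[OF finite_vertices Nil_in_vertices butlast_in_vertices])
  finally show ?thesis .
qed

lemma sum_tree_measure: "(\<Sum>\<sigma>\<in>\<Omega>. \<mu> \<sigma>) = 1"
  using mean_root_function[of "\<lambda>_. 1"] sum_p by (simp add: tm_mean_def)

lemma tree_measure_nonneg: "0 \<le> \<mu> \<sigma>"
  unfolding tree_measure_def
  by (auto intro!: mult_nonneg_nonneg prod_nonneg p_nonneg M_nonneg configs_less
           Nil_in_vertices butlast_in_vertices)

lemma mean_cong: "(\<And>\<sigma>. \<sigma> \<in> \<Omega> \<Longrightarrow> f \<sigma> = g \<sigma>) \<Longrightarrow> \<EE> f = \<EE> g"
  unfolding tm_mean_def by simp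

lemma mean_add: "\<EE> (\<lambda>\<sigma>. f \<sigma> + g \<sigma>) = \<EE> f + \<EE> g"
  unfolding tm_mean_def by (simp add: distrib_left sum.distrib)

lemma mean_diff: "\<EE> (\<lambda>\<sigma>. f \<sigma> - g \<sigma>) = \<EE> f - \<EE> g"
  unfolding tm_mean_def by (simp add: right_diff_distrib sum_subtractf)

lemma mean_cmult: "\<EE> (\<lambda>\<sigma>. c * f \<sigma>) = c * \<EE> f"
  unfolding tm_mean_def by (simp add: sum_distrib_left mult_ac)

lemma mean_const: "\<EE> (\<lambda>_. c) = c"
  unfolding tm_mean_def by (simp add: sum_distrib_right[symmetric] sum_tree_measure)

lemma mean_mono: "(\<And>\<sigma>. \<sigma> \<in> \<Omega> \<Longrightarrow> f \<sigma> \<le> g \<sigma>) \<Longrightarrow> \<EE> f \<le> \<EE> g"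
  unfolding tm_mean_def by (intro sum_mono mult_left_mono tree_measure_nonneg)

lemma abs_mean_le: "\<bar>\<EE> f\<bar> \<le> \<EE> (\<lambda>\<sigma>. \<bar>f \<sigma>\<bar>)"
  unfolding tm_mean_def
  by (rule order_trans[OF sum_abs]) (simp add: abs_mult tree_measure_nonneg)

lemma mean_sq_nonneg: "0 \<le> \<EE> (\<lambda>\<sigma>. (f \<sigma>)\<^sup>2)"
  using mean_mono[of "\<lambda>_. 0" "\<lambda>\<sigma>. (f \<sigma>)\<^sup>2"] by (simp add: mean_const)

lemma variance_nonneg: "0 \<le> tm_variance q M p b n f"
  using mean_sq_nonneg unfolding tm_variance_def tm_mean_def .

lemma variance_centred: "\<EE> f = 0 \<Longrightarrow> tm_variance q M p b n f = \<EE> (\<lambda>\<sigma>. (f \<sigma>)\<^sup>2)"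
  unfolding tm_variance_def by (simp add: tm_mean_def)

lemma mean_sum: "finite A \<Longrightarrow> \<EE> (\<lambda>\<sigma>. \<Sum>v\<in>A. f v \<sigma>) = (\<Sum>v\<in>A. \<EE> (f v))"
  unfolding tm_mean_def by (simp add: sum_distrib_left sum.swap[of _ \<Omega>])

lemma mean_divide: "\<EE> (\<lambda>\<sigma>. f \<sigma> / c) = \<EE> f / c"
  using mean_cmult[of "1 / c" f] by simp

lemma sum_agree_off:
  assumes v: "v \<in> V" and \<sigma>: "\<sigma> \<in> \<Omega>"
  shows "(\<Sum>\<tau>\<in>\<Omega>. if agree_off v \<sigma> \<tau> then G \<tau> else 0) = (\<Sum>a<q. G (\<sigma>(v := a)))"
proof -
  have "{\<tau>\<in>\<Omega>. agree_off v \<sigma> \<tau>} = (\<lambda>a. \<sigma>(v := a)) ` {..<q}"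
  proof (intro equalityI subsetI)
    fix \<tau> assume "\<tau> \<in> {\<tau>\<in>\<Omega>. agree_off v \<sigma> \<tau>}"
    then have "\<tau> = \<sigma>(v := \<tau> v)" and "\<tau> v < q"
      using configs_less[OF _ v] by (auto simp: agree_off_def fun_eq_iff)
    then show "\<tau> \<in> (\<lambda>a. \<sigma>(v := a)) ` {..<q}" by blast
  qed (use fun_upd_in_configs[OF \<sigma> v] in \<open>auto simp: agree_off_def\<close>)
  moreover have "inj_on (\<lambda>a. \<sigma>(v := a)) {..<q}"
    by (auto simp: inj_on_def fun_eq_iff dest: spec[of _ v])
  ultimately show ?thesis
    using finite_configs by (simp add: sum.inter_filter[symmetric] sum.reindex)
qed

lemma sum_fiber_swap:
  assumes v: "v \<in> V"
  shows "(\<Sum>\<sigma>\<in>\<Omega>. \<Sum>a<q. T \<sigma> (\<sigma>(v := a))) = (\<Sum>\<sigma>\<in>\<Omega>. \<Sum>a<q. T (\<sigma>(v := a)) \<sigma>)"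
proof -
  have "(\<Sum>\<sigma>\<in>\<Omega>. \<Sum>a<q. T \<sigma> (\<sigma>(v := a))) = (\<Sum>\<sigma>\<in>\<Omega>. \<Sum>\<tau>\<in>\<Omega>. if agree_off v \<sigma> \<tau> then T \<sigma> \<tau> else 0)"
    by (simp add: sum_agree_off[OF v])
  also have "\<dots> = (\<Sum>\<tau>\<in>\<Omega>. \<Sum>\<sigma>\<in>\<Omega>. if agree_off v \<tau> \<sigma> then T \<sigma> \<tau> else 0)"
    by (subst sum.swap) (auto simp: agree_off_def intro!: sum.cong)
  also have "\<dots> = (\<Sum>\<tau>\<in>\<Omega>. \<Sum>a<q. T (\<tau>(v := a)) \<tau>)"
    by (simp add: sum_agree_off[OF v])
  finally show ?thesis .
qed

section \<open>Heat-bath updates and the Dirichlet form\<close>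

text \<open>The edges touching \<open>v\<close>, each edge being named by its lower endpoint.\<close>
definition local_edges :: "nat list \<Rightarrow> nat list set" where
  "local_edges v = {w \<in> V - {[]}. w = v \<or> butlast w = v}"

definition local_weight :: "nat list \<Rightarrow> (nat list \<Rightarrow> nat) \<Rightarrow> nat \<Rightarrow> real" where
  "local_weight v \<sigma> a = (if v = [] then p a else 1) *
     (\<Prod>w\<in>local_edges v. M ((\<sigma>(v := a)) (butlast w)) ((\<sigma>(v := a)) w))"

definition rest_weight :: "nat list \<Rightarrow> (nat list \<Rightarrow> nat) \<Rightarrow> real" where
  "rest_weight v \<sigma> = (if v = [] then 1 else p (\<sigma> [])) *
     (\<Prod>w\<in>(V - {[]}) - local_edges v. M (\<sigma> (butlast w)) (\<sigma> w))"

definition local_norm :: "nat list \<Rightarrow> (nat list \<Rightarrow> nat) \<Rightarrow> real" where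
  "local_norm v \<sigma> = (\<Sum>a<q. local_weight v \<sigma> a)"

text \<open>Where all local
  weights vanish (a set of measure zero) it is the junk point mass at label \<open>0\<close>; defining it
  through \<open>local_weight\<close> rather than through \<open>\<mu>\<close> keeps it a function of the neighbours of \<open>v\<close>.\<close>
definition cond_prob :: "nat list \<Rightarrow> (nat list \<Rightarrow> nat) \<Rightarrow> nat \<Rightarrow> real" where
  "cond_prob v \<sigma> a =
     (if local_norm v \<sigma> = 0 then (if a = 0 then 1 else 0) else local_weight v \<sigma> a / local_norm v \<sigma>)"

definition heat_bath :: "nat list \<Rightarrow> ((nat list \<Rightarrow> nat) \<Rightarrow> real) \<Rightarrow> (nat list \<Rightarrow> nat) \<Rightarrow> real" where
  "heat_bath v g \<sigma> = (\<Sum>a<q. cond_prob v \<sigma> a * g (\<sigma>(v := a)))"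

definition fiber_mass :: "nat list \<Rightarrow> (nat list \<Rightarrow> nat) \<Rightarrow> real" where
  "fiber_mass v \<sigma> = (\<Sum>a<q. \<mu> (\<sigma>(v := a)))"

lemma tree_measure_factor:
  assumes \<sigma>: "\<sigma> \<in> \<Omega>" and v: "v \<in> V" and a: "a < q"
  shows "\<mu> (\<sigma>(v := a)) = local_weight v \<sigma> a * rest_weight v \<sigma>"
proof -
  let ?\<sigma>' = "\<sigma>(v := a)"
  have sub: "local_edges v \<subseteq> V - {[]}" unfolding local_edges_def by auto
  have "(\<Prod>w\<in>V - {[]}. M (?\<sigma>' (butlast w)) (?\<sigma>' w))
      = (\<Prod>w\<in>(V - {[]}) - local_edges v. M (?\<sigma>' (butlast w)) (?\<sigma>' w)) *
        (\<Prod>w\<in>local_edges v. M (?\<sigma>' (butlast w)) (?\<sigma>' w))"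
    using finite_vertices by (intro prod.subset_diff[OF sub]) simp
  also have "(\<Prod>w\<in>(V - {[]}) - local_edges v. M (?\<sigma>' (butlast w)) (?\<sigma>' w))
      = (\<Prod>w\<in>(V - {[]}) - local_edges v. M (\<sigma> (butlast w)) (\<sigma> w))"
    by (intro prod.cong refl) (auto simp: local_edges_def)
  finally have "\<mu> ?\<sigma>' = p (?\<sigma>' []) * ((\<Prod>w\<in>(V - {[]}) - local_edges v. M (\<sigma> (butlast w)) (\<sigma> w)) *
      (\<Prod>w\<in>local_edges v. M (?\<sigma>' (butlast w)) (?\<sigma>' w)))"
    using fun_upd_in_configs[OF \<sigma> v a] by (simp only: tree_measure_def if_True)
  moreover have "p (?\<sigma>' []) = (if v = [] then p a else 1) * (if v = [] then 1 else p (\<sigma> []))"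
    by simp
  ultimately show ?thesis
    unfolding local_weight_def rest_weight_def by (simp only: ac_simps)
qed

lemma local_weight_cong:
  assumes adj: "\<And>u. tree_adj u v \<Longrightarrow> \<sigma>' u = \<sigma> u"
  shows "local_weight v \<sigma>' a = local_weight v \<sigma> a"
proof -
  have "M ((\<sigma>'(v := a)) (butlast w)) ((\<sigma>'(v := a)) w) = M ((\<sigma>(v := a)) (butlast w)) ((\<sigma>(v := a)) w)"
    if w: "w \<in> local_edges v" for w
  proof (cases "w = v")
    case True
    then have "tree_adj (butlast w) v" "butlast w \<noteq> v"
      using w butlast_neq_self[of w] by (auto simp: local_edges_def tree_adj_def)
    with True show ?thesis by (simp add: adj)
  next
    case False
    then have "tree_adj w v" "butlast w = v" using w by (auto simp: local_edges_def tree_adj_def)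
    with False show ?thesis by (simp add: adj)
  qed
  then show ?thesis unfolding local_weight_def by (simp cong: prod.cong)
qed

lemma local_weight_nonneg:
  assumes \<sigma>: "\<sigma> \<in> \<Omega>" and v: "v \<in> V" and a: "a < q"
  shows "0 \<le> local_weight v \<sigma> a"
proof -
  have "0 \<le> M ((\<sigma>(v := a)) (butlast w)) ((\<sigma>(v := a)) w)" if "w \<in> local_edges v" for w
    using that
    by (intro M_nonneg configs_less[OF fun_upd_in_configs[OF \<sigma> v a]] butlast_in_vertices)
       (auto simp: local_edges_def)
  then show ?thesis
    unfolding local_weight_def using p_nonneg[OF a] by (auto intro!: mult_nonneg_nonneg prod_nonneg)
qed

lemma local_norm_nonneg: "\<sigma> \<in> \<Omega> \<Longrightarrow> v \<in> V \<Longrightarrow> 0 \<le> local_norm v \<sigma>"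
  unfolding local_norm_def by (intro sum_nonneg) (simp add: local_weight_nonneg)

lemma cond_prob_nonneg: "\<sigma> \<in> \<Omega> \<Longrightarrow> v \<in> V \<Longrightarrow> a < q \<Longrightarrow> 0 \<le> cond_prob v \<sigma> a"
  unfolding cond_prob_def using local_weight_nonneg local_norm_nonneg by auto

lemma sum_cond_prob: "\<sigma> \<in> \<Omega> \<Longrightarrow> v \<in> V \<Longrightarrow> (\<Sum>a<q. cond_prob v \<sigma> a) = 1"
proof (cases "local_norm v \<sigma> = 0")
  case True
  then show ?thesis unfolding cond_prob_def using q_pos by (simp add: sum.delta)
next
  case False
  have "(\<Sum>a<q. local_weight v \<sigma> a / local_norm v \<sigma>) = local_norm v \<sigma> / local_norm v \<sigma>"
    unfolding local_norm_def by (rule sum_divide_distrib[symmetric])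
  with False show ?thesis unfolding cond_prob_def by simp
qed

lemma cond_prob_cong:
  assumes "\<And>u. tree_adj u v \<Longrightarrow> \<sigma>' u = \<sigma> u"
  shows "cond_prob v \<sigma>' a = cond_prob v \<sigma> a"
proof -
  have "local_weight v \<sigma>' = local_weight v \<sigma>"
    using local_weight_cong[OF assms] by (rule ext)
  then show ?thesis unfolding cond_prob_def local_norm_def by simp
qed

lemma cond_prob_upd: "cond_prob v (\<sigma>(v := c)) a = cond_prob v \<sigma> a"
  by (rule cond_prob_cong) (auto simp: not_tree_adj_self)

lemma tree_measure_upd:
  assumes \<sigma>: "\<sigma> \<in> \<Omega>" and v: "v \<in> V" and a: "a < q"
  shows "\<mu> (\<sigma>(v := a)) = cond_prob v \<sigma> a * fiber_mass v \<sigma>"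
proof -
  have mass: "fiber_mass v \<sigma> = local_norm v \<sigma> * rest_weight v \<sigma>"
    unfolding fiber_mass_def local_norm_def by (simp add: tree_measure_factor[OF \<sigma> v] sum_distrib_right)
  show ?thesis
  proof (cases "local_norm v \<sigma> = 0")
    case True
    then have "local_weight v \<sigma> a = 0"
      using sum_nonneg_eq_0_iff[of "{..<q}" "local_weight v \<sigma>"] local_weight_nonneg[OF \<sigma> v] a
      unfolding local_norm_def by auto
    then show ?thesis using mass True by (simp add: tree_measure_factor[OF \<sigma> v a])
  qed (simp add: mass tree_measure_factor[OF \<sigma> v a] cond_prob_def)
qed

lemma tree_measure_eq_cond_prob: "\<sigma> \<in> \<Omega> \<Longrightarrow> v \<in> V \<Longrightarrow> \<mu> \<sigma> = cond_prob v \<sigma> (\<sigma> v) * fiber_mass v \<sigma>"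
  using tree_measure_upd[of \<sigma> v "\<sigma> v"] configs_less by simp

lemma mean_heat_bath:
  assumes v: "v \<in> V"
  shows "\<EE> (heat_bath v g) = \<EE> g"
proof -
  have "\<EE> (heat_bath v g) = (\<Sum>\<sigma>\<in>\<Omega>. \<Sum>a<q. (\<lambda>\<sigma> \<tau>. \<mu> \<sigma> * cond_prob v \<sigma> (\<tau> v) * g \<tau>) \<sigma> (\<sigma>(v := a)))"
    unfolding tm_mean_def heat_bath_def by (simp add: sum_distrib_left mult.assoc)
  also have "\<dots> = (\<Sum>\<sigma>\<in>\<Omega>. \<Sum>a<q. (\<lambda>\<sigma> \<tau>. \<mu> \<sigma> * cond_prob v \<sigma> (\<tau> v) * g \<tau>) (\<sigma>(v := a)) \<sigma>)"
    by (rule sum_fiber_swap[OF v])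
  also have "\<dots> = (\<Sum>\<sigma>\<in>\<Omega>. \<Sum>a<q. \<mu> (\<sigma>(v := a)) * cond_prob v \<sigma> (\<sigma> v) * g \<sigma>)"
    by (simp add: cond_prob_upd)
  also have "\<dots> = (\<Sum>\<sigma>\<in>\<Omega>. fiber_mass v \<sigma> * cond_prob v \<sigma> (\<sigma> v) * g \<sigma>)"
    unfolding fiber_mass_def by (simp add: sum_distrib_right)
  also have "\<dots> = \<EE> g"
    unfolding tm_mean_def using v by (intro sum.cong refl) (simp add: tree_measure_eq_cond_prob)
  finally show ?thesis .
qed

lemma heat_bath_upd: "heat_bath v g (\<sigma>(v := c)) = heat_bath v g \<sigma>"
  unfolding heat_bath_def by (simp add: cond_prob_upd)

lemma heat_bath_mult_invariant:
  "(\<And>a. h (\<sigma>(v := a)) = h \<sigma>) \<Longrightarrow> heat_bath v (\<lambda>\<tau>. h \<tau> * g \<tau>) \<sigma> = h \<sigma> * heat_bath v g \<sigma>"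
  unfolding heat_bath_def by (simp add: sum_distrib_left algebra_simps)

lemma mean_sq_heat_bath:
  assumes v: "v \<in> V"
  shows "\<EE> (\<lambda>\<sigma>. (heat_bath v f \<sigma>)\<^sup>2) = \<EE> (\<lambda>\<sigma>. f \<sigma> * heat_bath v f \<sigma>)"
proof -
  have "\<EE> (\<lambda>\<sigma>. (heat_bath v f \<sigma>)\<^sup>2) = \<EE> (heat_bath v (\<lambda>\<tau>. heat_bath v f \<tau> * f \<tau>))"
    by (intro mean_cong) (simp add: heat_bath_mult_invariant heat_bath_upd power2_eq_square)
  also have "\<dots> = \<EE> (\<lambda>\<sigma>. heat_bath v f \<sigma> * f \<sigma>)"
    by (rule mean_heat_bath[OF v])
  finally show ?thesis by (simp add: mult.commute)
qed

lemma tree_measure_mult_glauber_rate: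
  assumes \<sigma>: "\<sigma> \<in> \<Omega>" and \<tau>: "\<tau> \<in> \<Omega>"
  shows "\<mu> \<sigma> * glauber_rate q M p b n \<sigma> \<tau>
       = (\<Sum>v\<in>V. if agree_off v \<sigma> \<tau> then \<mu> \<sigma> * cond_prob v \<sigma> (\<tau> v) else 0)"
proof -
  have "\<mu> \<sigma> * (\<mu> \<tau> / fiber_mass v \<sigma>) = \<mu> \<sigma> * cond_prob v \<sigma> (\<tau> v)"
    if v: "v \<in> V" and agree: "agree_off v \<sigma> \<tau>" for v
  proof (cases "fiber_mass v \<sigma> = 0")
    case False
    have "\<tau> = \<sigma>(v := \<tau> v)" using agree unfolding agree_off_def by (auto simp: fun_eq_iff)
    then have "\<mu> \<tau> = cond_prob v \<sigma> (\<tau> v) * fiber_mass v \<sigma>"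
      using tree_measure_upd[OF \<sigma> v configs_less[OF \<tau> v]] by simp
    then show ?thesis using False by simp
  qed (simp add: tree_measure_eq_cond_prob[OF \<sigma> v])
  then show ?thesis
    unfolding glauber_rate_def sum_distrib_left
    by (intro sum.cong refl) (auto simp: agree_off_def fiber_mass_def)
qed

lemma dirichlet_form_eq_local:
  "dirichlet_form q M p b n f =
     1/2 * (\<Sum>v\<in>V. \<EE> (\<lambda>\<sigma>. \<Sum>a<q. cond_prob v \<sigma> a * (f \<sigma> - f (\<sigma>(v := a)))\<^sup>2))"
proof -
  have "dirichlet_form q M p b n f = 1/2 * (\<Sum>\<sigma>\<in>\<Omega>. \<Sum>\<tau>\<in>\<Omega>. \<Sum>v\<in>V.
          if agree_off v \<sigma> \<tau> then \<mu> \<sigma> * cond_prob v \<sigma> (\<tau> v) * (f \<sigma> - f \<tau>)\<^sup>2 else 0)"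
    unfolding dirichlet_form_def
    by (intro arg_cong[where f="\<lambda>x. 1/2 * x"] sum.cong refl)
       (auto simp: tree_measure_mult_glauber_rate sum_distrib_right intro!: sum.cong)
  also have "\<dots> = 1/2 * (\<Sum>v\<in>V. \<Sum>\<sigma>\<in>\<Omega>. \<Sum>\<tau>\<in>\<Omega>.
          if agree_off v \<sigma> \<tau> then \<mu> \<sigma> * cond_prob v \<sigma> (\<tau> v) * (f \<sigma> - f \<tau>)\<^sup>2 else 0)"
    by (subst sum.swap) (simp add: sum.swap[of _ \<Omega> V])
  also have "\<dots> = 1/2 * (\<Sum>v\<in>V. \<EE> (\<lambda>\<sigma>. \<Sum>a<q. cond_prob v \<sigma> a * (f \<sigma> - f (\<sigma>(v := a)))\<^sup>2))"
    unfolding tm_mean_def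
    by (intro arg_cong[where f="\<lambda>x. 1/2 * x"] sum.cong refl)
       (simp add: sum_agree_off sum_distrib_left mult.assoc)
  finally show ?thesis .
qed

lemma local_variance_eq:
  assumes "\<sigma> \<in> \<Omega>" "v \<in> V"
  shows "(\<Sum>a<q. cond_prob v \<sigma> a * (f \<sigma> - f (\<sigma>(v := a)))\<^sup>2)
       = (f \<sigma>)\<^sup>2 - 2 * (f \<sigma> * heat_bath v f \<sigma>) + heat_bath v (\<lambda>\<tau>. (f \<tau>)\<^sup>2) \<sigma>"
proof -
  have "(\<Sum>a<q. cond_prob v \<sigma> a * (f \<sigma> - f (\<sigma>(v := a)))\<^sup>2)
      = (f \<sigma>)\<^sup>2 * (\<Sum>a<q. cond_prob v \<sigma> a) - 2 * f \<sigma> * heat_bath v f \<sigma> + heat_bath v (\<lambda>\<tau>. (f \<tau>)\<^sup>2) \<sigma>"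
    unfolding heat_bath_def
    by (simp add: power2_diff algebra_simps sum.distrib sum_subtractf sum_distrib_left)
  then show ?thesis using sum_cond_prob[OF assms] by simp
qed

lemma dirichlet_form_eq:
  "dirichlet_form q M p b n f = (\<Sum>v\<in>V. \<EE> (\<lambda>\<sigma>. (f \<sigma>)\<^sup>2) - \<EE> (\<lambda>\<sigma>. f \<sigma> * heat_bath v f \<sigma>))"
proof -
  have "\<EE> (\<lambda>\<sigma>. \<Sum>a<q. cond_prob v \<sigma> a * (f \<sigma> - f (\<sigma>(v := a)))\<^sup>2)
      = 2 * (\<EE> (\<lambda>\<sigma>. (f \<sigma>)\<^sup>2) - \<EE> (\<lambda>\<sigma>. f \<sigma> * heat_bath v f \<sigma>))" if v: "v \<in> V" for v
  proof -
    have "\<EE> (\<lambda>\<sigma>. \<Sum>a<q. cond_prob v \<sigma> a * (f \<sigma> - f (\<sigma>(v := a)))\<^sup>2)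
        = \<EE> (\<lambda>\<sigma>. (f \<sigma>)\<^sup>2 - 2 * (f \<sigma> * heat_bath v f \<sigma>) + heat_bath v (\<lambda>\<tau>. (f \<tau>)\<^sup>2) \<sigma>)"
      using v by (intro mean_cong local_variance_eq)
    then show ?thesis
      using mean_heat_bath[OF v, of "\<lambda>\<tau>. (f \<tau>)\<^sup>2"] by (simp add: mean_add mean_diff mean_cmult)
  qed
  then have "(\<Sum>v\<in>V. \<EE> (\<lambda>\<sigma>. \<Sum>a<q. cond_prob v \<sigma> a * (f \<sigma> - f (\<sigma>(v := a)))\<^sup>2))
      = 2 * (\<Sum>v\<in>V. \<EE> (\<lambda>\<sigma>. (f \<sigma>)\<^sup>2) - \<EE> (\<lambda>\<sigma>. f \<sigma> * heat_bath v f \<sigma>))"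
    by (simp add: sum_distrib_left)
  then show ?thesis
    unfolding dirichlet_form_eq_local by simp
qed

lemma dirichlet_form_nonneg: "0 \<le> dirichlet_form q M p b n f"
  unfolding dirichlet_form_def glauber_rate_def
  by (intro mult_nonneg_nonneg sum_nonneg)
     (auto intro!: divide_nonneg_nonneg sum_nonneg tree_measure_nonneg)

section \<open>The random-scan Gibbs sampler\<close>

text \<open>One step of the Glauber dynamics observed at its jump times: a uniformly chosen
  vertex receives a heat-bath update.\<close>
definition gibbs :: "((nat list \<Rightarrow> nat) \<Rightarrow> real) \<Rightarrow> (nat list \<Rightarrow> nat) \<Rightarrow> real" where
  "gibbs g \<sigma> = (\<Sum>v\<in>V. heat_bath v g \<sigma>) / card V"

lemma card_vertices_pos: "0 < card V"
  using finite_vertices Nil_in_vertices card_gt_0_iff by blast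

lemma mean_gibbs: "\<EE> (gibbs f) = \<EE> f"
proof -
  have "\<EE> (gibbs f) = (\<Sum>v\<in>V. \<EE> (heat_bath v f)) / card V"
    unfolding gibbs_def by (simp add: mean_divide mean_sum finite_vertices)
  also have "\<dots> = \<EE> f"
    using card_vertices_pos by (simp add: mean_heat_bath)
  finally show ?thesis .
qed

lemma mean_gibbs_iter: "\<EE> ((gibbs ^^ m) f) = \<EE> f"
  by (induction m) (simp_all add: mean_gibbs)

lemma mean_sq_gibbs_le:
  "\<EE> (\<lambda>\<sigma>. (gibbs f \<sigma>)\<^sup>2) \<le> \<EE> (\<lambda>\<sigma>. (f \<sigma>)\<^sup>2) - dirichlet_form q M p b n f / card V"
proof -
  have "\<EE> (\<lambda>\<sigma>. (gibbs f \<sigma>)\<^sup>2) \<le> \<EE> (\<lambda>\<sigma>. (\<Sum>v\<in>V. (heat_bath v f \<sigma>)\<^sup>2) / card V)"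
    unfolding gibbs_def
    by (intro mean_mono square_of_average_le finite_vertices) (use Nil_in_vertices in auto)
  also have "\<dots> = (\<Sum>v\<in>V. \<EE> (\<lambda>\<sigma>. f \<sigma> * heat_bath v f \<sigma>)) / card V"
    by (simp add: mean_divide mean_sum finite_vertices mean_sq_heat_bath)
  also have "\<dots> = \<EE> (\<lambda>\<sigma>. (f \<sigma>)\<^sup>2) - dirichlet_form q M p b n f / card V"
    unfolding dirichlet_form_eq using card_vertices_pos by (simp add: sum_subtractf field_simps)
  finally show ?thesis .
qed

lemma gibbs_cong: "(\<And>\<tau>. \<tau> \<in> \<Omega> \<Longrightarrow> g \<tau> = g' \<tau>) \<Longrightarrow> \<sigma> \<in> \<Omega> \<Longrightarrow> gibbs g \<sigma> = gibbs g' \<sigma>"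
  unfolding gibbs_def heat_bath_def by (simp add: fun_upd_in_configs)

lemma gibbs_add_const:
  assumes \<sigma>: "\<sigma> \<in> \<Omega>"
  shows "gibbs (\<lambda>\<tau>. f \<tau> + c) \<sigma> = gibbs f \<sigma> + c"
proof -
  have "heat_bath v (\<lambda>\<tau>. f \<tau> + c) \<sigma> = heat_bath v f \<sigma> + c" if v: "v \<in> V" for v
    using sum_cond_prob[OF \<sigma> v]
    by (simp add: heat_bath_def distrib_left sum.distrib flip: sum_distrib_right)
  then show ?thesis
    unfolding gibbs_def using card_vertices_pos by (simp add: sum.distrib field_simps)
qed

lemma gibbs_iter_add_const:
  "\<sigma> \<in> \<Omega> \<Longrightarrow> (gibbs ^^ m) (\<lambda>\<tau>. f \<tau> + c) \<sigma> = (gibbs ^^ m) f \<sigma> + c"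
proof (induction m arbitrary: \<sigma>)
  case (Suc m)
  then have "gibbs ((gibbs ^^ m) (\<lambda>\<tau>. f \<tau> + c)) \<sigma> = gibbs (\<lambda>\<tau>. (gibbs ^^ m) f \<tau> + c) \<sigma>"
    by (intro gibbs_cong) simp_all
  then show ?case using gibbs_add_const[OF Suc.prems] by simp
qed simp

lemma mean_sq_gibbs_iter_le:
  assumes gap: "\<And>f. lam * tm_variance q M p b n f \<le> dirichlet_form q M p b n f"
    and centred: "\<EE> f = 0"
  shows "\<EE> (\<lambda>\<sigma>. ((gibbs ^^ m) f \<sigma>)\<^sup>2) \<le> exp (- lam * m / card V) * \<EE> (\<lambda>\<sigma>. (f \<sigma>)\<^sup>2)"
proof (induction m)
  case (Suc m)
  define g where "g = (gibbs ^^ m) f"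
  have var: "tm_variance q M p b n g = \<EE> (\<lambda>\<sigma>. (g \<sigma>)\<^sup>2)"
    unfolding g_def by (rule variance_centred) (simp add: mean_gibbs_iter centred)
  have N: "real (card V) > 0" using card_vertices_pos by simp
  have "\<EE> (\<lambda>\<sigma>. ((gibbs ^^ Suc m) f \<sigma>)\<^sup>2) \<le> \<EE> (\<lambda>\<sigma>. (g \<sigma>)\<^sup>2) - dirichlet_form q M p b n g / card V"
    unfolding g_def by (simp add: mean_sq_gibbs_le)
  also have "\<dots> \<le> (1 - lam / card V) * \<EE> (\<lambda>\<sigma>. (g \<sigma>)\<^sup>2)"
    using gap[of g] N unfolding var by (simp add: field_simps)
  also have "\<dots> \<le> exp (- lam / card V) * \<EE> (\<lambda>\<sigma>. (g \<sigma>)\<^sup>2)"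
    using exp_ge_add_one_self[of "- lam / card V"] mean_sq_nonneg by (intro mult_right_mono) auto
  also have "\<dots> \<le> exp (- lam / card V) * (exp (- lam * m / card V) * \<EE> (\<lambda>\<sigma>. (f \<sigma>)\<^sup>2))"
    using Suc.IH unfolding g_def by (intro mult_left_mono) auto
  also have "\<dots> = exp (- lam * Suc m / card V) * \<EE> (\<lambda>\<sigma>. (f \<sigma>)\<^sup>2)"
    by (simp add: mult.assoc[symmetric] exp_add[symmetric] add_divide_distrib[symmetric] algebra_simps)
  finally show ?case .
qed simp

section \<open>Influences\<close>

definition influence :: "nat list \<Rightarrow> ((nat list \<Rightarrow> nat) \<Rightarrow> real) \<Rightarrow> real" where
  "influence u g = Max ((\<lambda>(\<sigma>, a). \<bar>g \<sigma> - g (\<sigma>(u := a))\<bar>) ` (\<Omega> \<times> {..<q}))"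

lemma influence_ge: "\<sigma> \<in> \<Omega> \<Longrightarrow> a < q \<Longrightarrow> \<bar>g \<sigma> - g (\<sigma>(u := a))\<bar> \<le> influence u g"
  unfolding influence_def using finite_configs by (intro Max_ge) auto

lemma influence_le:
  assumes "\<And>\<sigma> a. \<sigma> \<in> \<Omega> \<Longrightarrow> a < q \<Longrightarrow> \<bar>g \<sigma> - g (\<sigma>(u := a))\<bar> \<le> B"
  shows "influence u g \<le> B"
  unfolding influence_def using assms finite_configs configs_nonempty q_pos
  by (subst Max_le_iff) auto

lemma influence_nonneg: "0 \<le> influence u g"
proof -
  obtain \<sigma> where "\<sigma> \<in> \<Omega>" using configs_nonempty by blast
  with influence_ge[of \<sigma> 0 g u] q_pos show ?thesis by simp
qed

lemma abs_sum_cond_prob_le: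
  assumes \<sigma>: "\<sigma> \<in> \<Omega>" and v: "v \<in> V" and bound: "\<And>a. a < q \<Longrightarrow> \<bar>x a\<bar> \<le> B"
  shows "\<bar>\<Sum>a<q. cond_prob v \<sigma> a * x a\<bar> \<le> B"
proof -
  have "\<bar>\<Sum>a<q. cond_prob v \<sigma> a * x a\<bar> \<le> (\<Sum>a<q. cond_prob v \<sigma> a * B)"
    using cond_prob_nonneg[OF \<sigma> v] bound
    by (intro order_trans[OF sum_abs] sum_mono) (simp add: abs_mult mult_left_mono)
  then show ?thesis using sum_cond_prob[OF \<sigma> v] by (simp flip: sum_distrib_right)
qed

lemma abs_diff_sum_cond_prob_le:
  assumes \<sigma>: "\<sigma> \<in> \<Omega>" "\<sigma>' \<in> \<Omega>" and v: "v \<in> V" and bound: "\<And>a. a < q \<Longrightarrow> \<bar>x a - c\<bar> \<le> B"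
  shows "\<bar>(\<Sum>a<q. cond_prob v \<sigma> a * x a) - (\<Sum>a<q. cond_prob v \<sigma>' a * x a)\<bar> \<le> 2 * B"
proof -
  have centre: "(\<Sum>a<q. cond_prob v \<tau> a * x a) = (\<Sum>a<q. cond_prob v \<tau> a * (x a - c)) + c"
    if "\<tau> \<in> \<Omega>" for \<tau>
    using sum_cond_prob[OF that v]
    by (simp add: right_diff_distrib sum_subtractf flip: sum_distrib_right)
  show ?thesis
    unfolding centre[OF \<sigma>(1)] centre[OF \<sigma>(2)]
    using abs_sum_cond_prob_le[OF \<sigma>(1) v, of "\<lambda>a. x a - c", OF bound]
          abs_sum_cond_prob_le[OF \<sigma>(2) v, of "\<lambda>a. x a - c", OF bound] by linarith
qed

lemma influence_heat_bath:
  assumes u: "u \<in> V" and v: "v \<in> V"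
  shows "influence u (heat_bath v g) \<le> influence u g + (if tree_adj u v then 2 * influence v g else 0)"
proof (rule influence_le)
  fix \<sigma> c assume \<sigma>: "\<sigma> \<in> \<Omega>" and c: "c < q"
  define \<sigma>' where "\<sigma>' = \<sigma>(u := c)"
  have \<sigma>': "\<sigma>' \<in> \<Omega>" unfolding \<sigma>'_def using fun_upd_in_configs[OF \<sigma> u c] .
  show "\<bar>heat_bath v g \<sigma> - heat_bath v g (\<sigma>(u := c))\<bar>
      \<le> influence u g + (if tree_adj u v then 2 * influence v g else 0)"
  proof (cases "u = v")
    case True
    then show ?thesis using influence_nonneg[of u g] influence_nonneg[of v g] by (simp add: heat_bath_upd)
  next
    case False
    have "\<bar>g (\<sigma>(v := a)) - g (\<sigma>'(v := a))\<bar> \<le> influence u g" if a: "a < q" for a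
    proof -
      have "\<sigma>'(v := a) = (\<sigma>(v := a))(u := c)" unfolding \<sigma>'_def using False by (rule fun_upd_twist)
      then show ?thesis using influence_ge[OF fun_upd_in_configs[OF \<sigma> v a] c] by simp
    qed
    then have same_law: "\<bar>\<Sum>a<q. cond_prob v \<sigma> a * (g (\<sigma>(v := a)) - g (\<sigma>'(v := a)))\<bar> \<le> influence u g"
      by (rule abs_sum_cond_prob_le[OF \<sigma> v])
    have same_labels: "\<bar>(\<Sum>a<q. cond_prob v \<sigma> a * g (\<sigma>'(v := a))) - (\<Sum>a<q. cond_prob v \<sigma>' a * g (\<sigma>'(v := a)))\<bar>
        \<le> (if tree_adj u v then 2 * influence v g else 0)"
    proof (cases "tree_adj u v")
      case True
      have "\<bar>g (\<sigma>'(v := a)) - g \<sigma>'\<bar> \<le> influence v g" if "a < q" for a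
        using influence_ge[OF \<sigma>' that, of g v] by (simp add: abs_minus_commute)
      then have "\<bar>(\<Sum>a<q. cond_prob v \<sigma> a * g (\<sigma>'(v := a))) - (\<Sum>a<q. cond_prob v \<sigma>' a * g (\<sigma>'(v := a)))\<bar>
          \<le> 2 * influence v g"
        by (rule abs_diff_sum_cond_prob_le[OF \<sigma> \<sigma>' v])
      with True show ?thesis by simp
    next
      case False
      then have "cond_prob v \<sigma>' a = cond_prob v \<sigma> a" for a
        by (intro cond_prob_cong) (auto simp: \<sigma>'_def)
      with False show ?thesis by simp
    qed
    have "heat_bath v g \<sigma> - heat_bath v g \<sigma>'
        = (\<Sum>a<q. cond_prob v \<sigma> a * (g (\<sigma>(v := a)) - g (\<sigma>'(v := a))))
          + ((\<Sum>a<q. cond_prob v \<sigma> a * g (\<sigma>'(v := a))) - (\<Sum>a<q. cond_prob v \<sigma>' a * g (\<sigma>'(v := a))))"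
      unfolding heat_bath_def by (simp add: sum_subtractf right_diff_distrib)
    with same_law same_labels show ?thesis unfolding \<sigma>'_def by linarith
  qed
qed

lemma influence_gibbs:
  assumes u: "u \<in> V"
  shows "influence u (gibbs g) \<le> influence u g + 2 * (\<Sum>v\<in>V. if tree_adj u v then influence v g else 0) / card V"
proof -
  have N: "real (card V) > 0" using card_vertices_pos by simp
  have "influence u (gibbs g) \<le> (\<Sum>v\<in>V. influence u (heat_bath v g)) / card V"
  proof (rule influence_le)
    fix \<sigma> a assume \<sigma>: "\<sigma> \<in> \<Omega>" and a: "a < q"
    have "\<bar>gibbs g \<sigma> - gibbs g (\<sigma>(u := a))\<bar> = \<bar>\<Sum>v\<in>V. heat_bath v g \<sigma> - heat_bath v g (\<sigma>(u := a))\<bar> / card V"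
      unfolding gibbs_def using N by (simp add: sum_subtractf diff_divide_distrib[symmetric])
    also have "\<dots> \<le> (\<Sum>v\<in>V. influence u (heat_bath v g)) / card V"
      using N by (intro divide_right_mono order_trans[OF sum_abs] sum_mono influence_ge[OF \<sigma> a]) auto
    finally show "\<bar>gibbs g \<sigma> - gibbs g (\<sigma>(u := a))\<bar> \<le> (\<Sum>v\<in>V. influence u (heat_bath v g)) / card V" .
  qed
  also have "\<dots> \<le> (\<Sum>v\<in>V. influence u g + (if tree_adj u v then 2 * influence v g else 0)) / card V"
    using N by (intro divide_right_mono sum_mono influence_heat_bath[OF u]) auto
  also have "\<dots> = influence u g + 2 * (\<Sum>v\<in>V. if tree_adj u v then influence v g else 0) / card V"
  proof -
    have "(\<Sum>v\<in>V. if tree_adj u v then 2 * influence v g else 0)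
        = 2 * (\<Sum>v\<in>V. if tree_adj u v then influence v g else 0)"
      unfolding sum_distrib_left by (intro sum.cong) auto
    then show ?thesis using N by (simp add: sum.distrib field_simps)
  qed
  finally show ?thesis .
qed

lemma sum_adj_weight_le:
  fixes \<gamma> :: real
  assumes v: "v \<in> V" and \<gamma>: "1 \<le> \<gamma>"
  shows "(\<Sum>u\<in>V. if tree_adj u v then \<gamma> ^ (n - length u) else 0) \<le> (\<gamma> + b) * \<gamma> ^ (n - length v)"
proof -
  define w where "w u = \<gamma> ^ (n - length u)" for u :: "nat list"
  have w_nonneg: "0 \<le> w u" for u unfolding w_def using \<gamma> by simp
  have nbrs: "{u \<in> V. tree_adj u v} \<subseteq> insert (butlast v) ((\<lambda>i. v @ [i]) ` {..<b})"
  proof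
    fix u assume "u \<in> {u \<in> V. tree_adj u v}"
    then have "u \<in> V" "u = butlast v \<or> (u \<noteq> [] \<and> butlast u = v)" unfolding tree_adj_def by auto
    then show "u \<in> insert (butlast v) ((\<lambda>i. v @ [i]) ` {..<b})"
      unfolding tree_vertices_def
      by (metis (no_types, lifting) append_butlast_last_id image_eqI insert_iff last_in_set
          lessThan_iff mem_Collect_eq subset_iff)
  qed
  have "(\<Sum>u\<in>V. if tree_adj u v then w u else 0) = (\<Sum>u\<in>{u\<in>V. tree_adj u v}. w u)"
    using finite_vertices by (simp add: sum.inter_filter)
  also have "\<dots> \<le> (\<Sum>u\<in>insert (butlast v) ((\<lambda>i. v @ [i]) ` {..<b}). w u)"
    by (rule sum_mono2[OF _ nbrs w_nonneg]) simp
  also have "\<dots> \<le> w (butlast v) + (\<Sum>u\<in>(\<lambda>i. v @ [i]) ` {..<b}. w u)"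
    by (simp add: sum.insert_if w_nonneg)
  also have "(\<Sum>u\<in>(\<lambda>i. v @ [i]) ` {..<b}. w u) \<le> (\<Sum>i<b. w (v @ [i]))"
    using sum_image_le[of "{..<b}" w "\<lambda>i. v @ [i]"] w_nonneg by (simp add: comp_def)
  also have "(\<Sum>i<b. w (v @ [i])) \<le> b * w v"
    unfolding w_def using \<gamma> by simp (intro mult_left_mono power_increasing; simp)
  also have "w (butlast v) \<le> \<gamma> * w v"
    using \<gamma> v unfolding w_def tree_vertices_def
    by (simp flip: power_Suc) (intro power_increasing; auto)
  finally show ?thesis unfolding w_def by (simp add: algebra_simps)
qed

definition influence_potential :: "real \<Rightarrow> ((nat list \<Rightarrow> nat) \<Rightarrow> real) \<Rightarrow> real" where
  "influence_potential \<gamma> g = (\<Sum>u\<in>V. \<gamma> ^ (n - length u) * influence u g)"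

lemma influence_potential_nonneg: "0 \<le> \<gamma> \<Longrightarrow> 0 \<le> influence_potential \<gamma> g"
  unfolding influence_potential_def by (intro sum_nonneg mult_nonneg_nonneg influence_nonneg) auto

lemma influence_root_le_potential: "1 \<le> \<gamma> \<Longrightarrow> \<gamma> ^ n * influence [] g \<le> influence_potential \<gamma> g"
  unfolding influence_potential_def
  using sum.remove[OF finite_vertices Nil_in_vertices, of "\<lambda>u. \<gamma> ^ (n - length u) * influence u g"]
        sum_nonneg[of "V - {[]}" "\<lambda>u. \<gamma> ^ (n - length u) * influence u g"] influence_nonneg
  by auto

lemma influence_potential_gibbs_le:
  assumes \<gamma>: "1 \<le> \<gamma>"
  shows "influence_potential \<gamma> (gibbs g) \<le> (1 + 2 * (\<gamma> + b) / card V) * influence_potential \<gamma> g"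
proof -
  let ?w = "\<lambda>u. \<gamma> ^ (n - length u)"
  have N: "real (card V) > 0" using card_vertices_pos by simp
  have swap: "(\<Sum>u\<in>V. ?w u * (\<Sum>v\<in>V. if tree_adj u v then influence v g else 0))
      = (\<Sum>v\<in>V. influence v g * (\<Sum>u\<in>V. if tree_adj u v then ?w u else 0))"
    unfolding sum_distrib_left by (subst sum.swap) (auto intro!: sum.cong)
  have "influence_potential \<gamma> (gibbs g)
      \<le> (\<Sum>u\<in>V. ?w u * (influence u g + 2 * (\<Sum>v\<in>V. if tree_adj u v then influence v g else 0) / card V))"
    unfolding influence_potential_def using \<gamma> by (intro sum_mono mult_left_mono influence_gibbs) auto
  also have "\<dots> = influence_potential \<gamma> g
      + 2 / card V * (\<Sum>v\<in>V. influence v g * (\<Sum>u\<in>V. if tree_adj u v then ?w u else 0))"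
  proof -
    have "(\<Sum>u\<in>V. ?w u * (2 * (\<Sum>v\<in>V. if tree_adj u v then influence v g else 0) / card V))
        = 2 / card V * (\<Sum>u\<in>V. ?w u * (\<Sum>v\<in>V. if tree_adj u v then influence v g else 0))"
      unfolding sum_distrib_left[of "2 / real (card V)"] by (intro sum.cong refl) simp
    then show ?thesis unfolding influence_potential_def distrib_left sum.distrib swap by simp
  qed
  also have "\<dots> \<le> influence_potential \<gamma> g + 2 / card V * (\<Sum>v\<in>V. influence v g * ((\<gamma> + b) * ?w v))"
    using N \<gamma> sum_adj_weight_le[OF _ \<gamma>]
    by (intro add_left_mono mult_left_mono sum_mono influence_nonneg) auto
  also have "\<dots> = (1 + 2 * (\<gamma> + b) / card V) * influence_potential \<gamma> g"
    unfolding influence_potential_def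
    by (simp add: sum_distrib_left algebra_simps sum_divide_distrib add_divide_distrib sum.distrib)
  finally show ?thesis .
qed

lemma influence_potential_gibbs_iter_le:
  assumes \<gamma>: "1 \<le> \<gamma>"
  shows "influence_potential \<gamma> ((gibbs ^^ j) g) \<le> (1 + 2 * (\<gamma> + b) / card V) ^ j * influence_potential \<gamma> g"
proof (induction j)
  case (Suc j)
  have "0 \<le> 1 + 2 * (\<gamma> + b) / card V" using \<gamma> by simp
  with Suc.IH influence_potential_gibbs_le[OF \<gamma>, of "(gibbs ^^ j) g"] show ?case
    by (simp add: mult.assoc order_trans[OF _ mult_left_mono])
qed simp

lemma card_level: "card (level b n) = b ^ n"
  using card_lists_length_eq[of "{..<b}" n] unfolding level_def by (simp add: conj_commute)

lemma level_subset_vertices: "level b n \<subseteq> V"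
  unfolding level_def tree_vertices_def by auto

lemma influence_potential_leaf_function_le:
  assumes "\<And>x. \<bar>s x\<bar> \<le> 1"
  shows "influence_potential \<gamma> (\<lambda>\<sigma>. s (restrict \<sigma> (level b n))) \<le> 2 * real b ^ n"
proof -
  let ?\<phi> = "\<lambda>\<sigma>. s (restrict \<sigma> (level b n))"
  have influence_leaf: "influence u ?\<phi> \<le> (if u \<in> level b n then 2 else 0)" for u
  proof (rule influence_le)
    fix \<sigma> :: "nat list \<Rightarrow> nat" and a :: nat
    have "u \<notin> level b n \<Longrightarrow> restrict (\<sigma>(u := a)) (level b n) = restrict \<sigma> (level b n)"
      by (auto simp: restrict_def)
    then show "\<bar>?\<phi> \<sigma> - ?\<phi> (\<sigma>(u := a))\<bar> \<le> (if u \<in> level b n then 2 else 0)"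
      using assms[of "restrict \<sigma> (level b n)"] assms[of "restrict (\<sigma>(u := a)) (level b n)"] by auto
  qed
  have "\<gamma> ^ (n - length u) * influence u ?\<phi> \<le> (if u \<in> level b n then 2 else 0)" for u
  proof (cases "u \<in> level b n")
    case True
    then have "length u = n" by (simp add: level_def)
    with True show ?thesis using influence_leaf[of u] by simp
  next
    case False
    then show ?thesis using influence_leaf[of u] influence_nonneg[of u ?\<phi>] by simp
  qed
  then have "influence_potential \<gamma> ?\<phi> \<le> (\<Sum>u\<in>V. if u \<in> level b n then 2 else 0)"
    unfolding influence_potential_def by (intro sum_mono)
  also have "\<dots> = (\<Sum>u\<in>level b n. 2)"
    using finite_vertices level_subset_vertices by (intro sum.mono_neutral_cong_right) auto
  also have "\<dots> = 2 * real b ^ n"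
    by (simp add: card_level)
  finally show ?thesis .
qed

end

section \<open>Decay of root-leaf covariances\<close>

text \<open>The Gibbs sampler will be run for about \<open>horizon_factor b * n * card V\<close> steps. With
  \<open>\<gamma> = e\<^sup>2 b\<close> the influence potential grows by at most \<open>(1 + 2 (\<gamma> + b) / card V)\<^sup>m \<le> e\<^sup>n\<close>
  over that time, while the root weight \<open>\<gamma>\<^sup>n = e\<^sup>2\<^sup>n b\<^sup>n\<close> exceeds the initial potential \<open>2 b\<^sup>n\<close>
  of a leaf function by \<open>e\<^sup>2\<^sup>n\<close>.\<close>
definition horizon_factor :: "nat \<Rightarrow> real" where
  "horizon_factor b = 1 / (2 * (exp 2 * b + b))"

lemma horizon_factor_pos: "1 \<le> b \<Longrightarrow> 0 < horizon_factor b"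
  unfolding horizon_factor_def by (simp add: add_pos_pos)

lemma mult_exp_neg_le:
  fixes x :: real
  shows "x * exp (- x) \<le> 2 * exp (- x / 2)"
proof -
  have "x \<le> 2 * exp (x / 2)" using exp_ge_add_one_self[of "x / 2"] by linarith
  then have "x * exp (- x) \<le> 2 * exp (x / 2) * exp (- x)" by (intro mult_right_mono) auto
  also have "\<dots> = 2 * exp (- x / 2)" by (simp add: mult.assoc flip: exp_add)
  finally show ?thesis .
qed

context tree_process
begin

lemma influence_root_gibbs_iter_bound:
  fixes \<gamma> :: real
  assumes \<gamma>: "1 \<le> \<gamma>" and s: "\<And>x. \<bar>s x\<bar> \<le> 1"
  shows "\<gamma> ^ n * influence [] ((gibbs ^^ j) (\<lambda>\<sigma>. s (restrict \<sigma> (level b n))))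
           \<le> exp (j * (2 * (\<gamma> + b) / card V)) * (2 * b ^ n)"
proof -
  let ?x = "2 * (\<gamma> + b) / card V" and ?\<phi> = "\<lambda>\<sigma>. s (restrict \<sigma> (level b n))"
  have x: "0 \<le> ?x" using \<gamma> by simp
  have "\<gamma> ^ n * influence [] ((gibbs ^^ j) ?\<phi>) \<le> influence_potential \<gamma> ((gibbs ^^ j) ?\<phi>)"
    by (rule influence_root_le_potential[OF \<gamma>])
  also have "\<dots> \<le> (1 + ?x) ^ j * influence_potential \<gamma> ?\<phi>"
    by (rule influence_potential_gibbs_iter_le[OF \<gamma>])
  also have "\<dots> \<le> exp ?x ^ j * (2 * b ^ n)"
    using x \<gamma> influence_potential_leaf_function_le[OF s] influence_potential_nonneg
    by (intro mult_mono power_mono) auto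
  finally show ?thesis by (simp only: exp_of_nat_mult)
qed

lemma influence_root_gibbs_iter_le:
  assumes b: "1 \<le> b" and s: "\<And>x. \<bar>s x\<bar> \<le> 1" and j: "j \<le> horizon_factor b * n * card V"
  shows "influence [] ((gibbs ^^ j) (\<lambda>\<sigma>. s (restrict \<sigma> (level b n)))) \<le> 2 * exp (- real n)"
    (is "?I \<le> _")
proof -
  define \<gamma> where "\<gamma> = exp 2 * real b"
  have \<gamma>: "1 \<le> \<gamma>"
    unfolding \<gamma>_def using b mult_mono[of 1 "exp 2" 1 "real b"] by simp
  have N: "real (card V) > 0" using card_vertices_pos by simp
  have "j * (2 * (\<gamma> + b) / card V) \<le> horizon_factor b * n * card V * (2 * (\<gamma> + b) / card V)"
    using j \<gamma> by (intro mult_right_mono) auto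
  also have "\<dots> = n * (2 * (\<gamma> + b) * horizon_factor b)"
    using N by (simp add: field_simps)
  also have "2 * (\<gamma> + b) * horizon_factor b = 1"
  proof -
    have "0 < exp 2 * real b + real b" using b by (intro add_pos_pos) auto
    then show ?thesis unfolding horizon_factor_def \<gamma>_def by simp
  qed
  finally have "exp (j * (2 * (\<gamma> + b) / card V)) \<le> exp n" by simp
  then have "\<gamma> ^ n * ?I \<le> exp n * (2 * b ^ n)"
    by (intro order_trans[OF influence_root_gibbs_iter_bound[OF \<gamma> s] mult_right_mono]) auto
  moreover have "\<gamma> ^ n = exp n * (exp n * b ^ n)"
    unfolding \<gamma>_def by (simp add: power_mult_distrib mult.assoc flip: exp_of_nat_mult exp_add)
  ultimately have "b ^ n * (exp n * ?I) \<le> b ^ n * 2"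
    by (simp add: mult_ac)
  then have "exp n * ?I \<le> 2"
    using b by simp
  then show ?thesis
    by (simp add: exp_minus field_simps)
qed

lemma mean_root_heat_bath:
  assumes "v \<in> V" "v \<noteq> []"
  shows "\<EE> (\<lambda>\<sigma>. f (\<sigma> []) * heat_bath v g \<sigma>) = \<EE> (\<lambda>\<sigma>. f (\<sigma> []) * g \<sigma>)"
proof -
  have "heat_bath v (\<lambda>\<sigma>. f (\<sigma> []) * g \<sigma>) = (\<lambda>\<sigma>. f (\<sigma> []) * heat_bath v g \<sigma>)"
    using assms(2) by (intro ext heat_bath_mult_invariant[where h="\<lambda>\<sigma>. f (\<sigma> [])"]) simp
  with mean_heat_bath[OF assms(1), of "\<lambda>\<sigma>. f (\<sigma> []) * g \<sigma>"] show ?thesis by simp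
qed

text \<open>Only the update at the root sees a root function.\<close>
lemma abs_mean_root_gibbs_diff_le:
  assumes f_bound: "\<And>i. i < q \<Longrightarrow> \<bar>f i\<bar> \<le> 1"
  shows "\<bar>\<EE> (\<lambda>\<sigma>. f (\<sigma> []) * g \<sigma>) - \<EE> (\<lambda>\<sigma>. f (\<sigma> []) * gibbs g \<sigma>)\<bar> \<le> influence [] g / card V"
proof -
  let ?h = "\<lambda>g. \<EE> (\<lambda>\<sigma>. f (\<sigma> []) * g \<sigma>)"
  have N: "real (card V) > 0" using card_vertices_pos by simp
  have "?h (gibbs g) = (\<Sum>v\<in>V. ?h (heat_bath v g)) / card V"
    unfolding gibbs_def by (simp add: times_divide_eq_right mean_divide sum_distrib_left mean_sum finite_vertices)
  also have "\<dots> = (?h (heat_bath [] g) + (card V - 1) * ?h g) / card V"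
    using sum.remove[OF finite_vertices Nil_in_vertices, of "\<lambda>v. ?h (heat_bath v g)"]
    by (simp add: mean_root_heat_bath card_Diff_singleton finite_vertices Nil_in_vertices)
  finally have "?h g - ?h (gibbs g) = ?h (\<lambda>\<sigma>. g \<sigma> - heat_bath [] g \<sigma>) / card V"
    using N by (simp add: field_simps right_diff_distrib mean_diff of_nat_diff card_vertices_pos)
  moreover have "\<bar>?h (\<lambda>\<sigma>. g \<sigma> - heat_bath [] g \<sigma>)\<bar> \<le> influence [] g"
  proof -
    have "\<bar>f (\<sigma> []) * (g \<sigma> - heat_bath [] g \<sigma>)\<bar> \<le> influence [] g" if \<sigma>: "\<sigma> \<in> \<Omega>" for \<sigma>
    proof -
      have "g \<sigma> - heat_bath [] g \<sigma> = (\<Sum>a<q. cond_prob [] \<sigma> a * (g \<sigma> - g (\<sigma>([] := a))))"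
        unfolding heat_bath_def using sum_cond_prob[OF \<sigma> Nil_in_vertices]
        by (simp add: right_diff_distrib sum_subtractf flip: sum_distrib_right)
      also have "\<bar>\<dots>\<bar> \<le> influence [] g"
        by (rule abs_sum_cond_prob_le[OF \<sigma> Nil_in_vertices influence_ge[OF \<sigma>]])
      finally show ?thesis
        using f_bound[OF configs_less[OF \<sigma> Nil_in_vertices]] influence_nonneg[of "[]" g]
        by (simp add: abs_mult mult_le_one order_trans[OF mult_right_mono])
    qed
    then show ?thesis
      using abs_mean_le[of "\<lambda>\<sigma>. f (\<sigma> []) * (g \<sigma> - heat_bath [] g \<sigma>)"]
            mean_mono[of "\<lambda>\<sigma>. \<bar>f (\<sigma> []) * (g \<sigma> - heat_bath [] g \<sigma>)\<bar>" "\<lambda>_. influence [] g"]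
      by (simp add: mean_const)
  qed
  ultimately show ?thesis using N by (simp add: divide_right_mono)
qed

lemma abs_mean_root_gibbs_iter_diff_le:
  assumes f_bound: "\<And>i. i < q \<Longrightarrow> \<bar>f i\<bar> \<le> 1"
  shows "\<bar>\<EE> (\<lambda>\<sigma>. f (\<sigma> []) * g \<sigma>) - \<EE> (\<lambda>\<sigma>. f (\<sigma> []) * (gibbs ^^ m) g \<sigma>)\<bar>
           \<le> (\<Sum>j<m. influence [] ((gibbs ^^ j) g)) / card V"
proof (induction m)
  case (Suc m)
  with abs_mean_root_gibbs_diff_le[where f=f and g="(gibbs ^^ m) g", OF f_bound] show ?case
    by (simp add: add_divide_distrib)
qed simp

lemma mean_abs_le_am_gm: "0 < t \<Longrightarrow> \<EE> (\<lambda>\<sigma>. \<bar>g \<sigma>\<bar>) \<le> (t\<^sup>2 + \<EE> (\<lambda>\<sigma>. (g \<sigma>)\<^sup>2)) / (2 * t)"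
proof -
  assume t: "0 < t"
  have "\<bar>g \<sigma>\<bar> \<le> (t\<^sup>2 + (g \<sigma>)\<^sup>2) / (2 * t)" for \<sigma>
    using t sum_squares_bound[of t "\<bar>g \<sigma>\<bar>"] by (simp add: field_simps power2_eq_square)
  then have "\<EE> (\<lambda>\<sigma>. \<bar>g \<sigma>\<bar>) \<le> \<EE> (\<lambda>\<sigma>. (t\<^sup>2 + (g \<sigma>)\<^sup>2) / (2 * t))"
    by (intro mean_mono)
  then show ?thesis by (simp add: mean_divide mean_add mean_const)
qed

lemma abs_mean_root_gibbs_iter_le:
  assumes gap: "\<And>f. lam * tm_variance q M p b n f \<le> dirichlet_form q M p b n f"
    and f_bound: "\<And>i. i < q \<Longrightarrow> \<bar>f i\<bar> \<le> 1" and f_centred: "(\<Sum>i<q. p i * f i) = 0"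
    and \<phi>: "\<And>\<sigma>. \<sigma> \<in> \<Omega> \<Longrightarrow> \<bar>\<phi> \<sigma>\<bar> \<le> 1"
  shows "\<bar>\<EE> (\<lambda>\<sigma>. f (\<sigma> []) * (gibbs ^^ m) \<phi> \<sigma>)\<bar> \<le> 5/2 * exp (- lam * m / (2 * card V))"
proof -
  define c where "c = \<EE> \<phi>"
  define g where "g = (gibbs ^^ m) (\<lambda>\<sigma>. \<phi> \<sigma> - c)"
  define t where "t = exp (- lam * m / (2 * card V))"
  have t: "0 < t" "t\<^sup>2 = exp (- lam * m / card V)"
    unfolding t_def by (simp_all add: power2_eq_square flip: exp_add)
  have "\<bar>c\<bar> \<le> 1"
    unfolding c_def using abs_mean_le[of \<phi>] mean_mono[of "\<lambda>\<sigma>. \<bar>\<phi> \<sigma>\<bar>" "\<lambda>_. 1"] \<phi> by (simp add: mean_const)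
  then have "(\<phi> \<sigma> - c)\<^sup>2 \<le> 2\<^sup>2" if "\<sigma> \<in> \<Omega>" for \<sigma>
    using \<phi>[OF that] by (subst power2_le_iff_abs_le) auto
  then have "\<EE> (\<lambda>\<sigma>. (\<phi> \<sigma> - c)\<^sup>2) \<le> 4"
    using mean_mono[of "\<lambda>\<sigma>. (\<phi> \<sigma> - c)\<^sup>2" "\<lambda>_. 2\<^sup>2"] by (simp add: mean_const)
  then have g_sq: "\<EE> (\<lambda>\<sigma>. (g \<sigma>)\<^sup>2) \<le> 4 * t\<^sup>2"
    using mean_sq_gibbs_iter_le[OF gap, of "\<lambda>\<sigma>. \<phi> \<sigma> - c" m] mult_left_mono[of _ 4 "t\<^sup>2"]
    unfolding g_def t(2) by (simp add: mean_diff mean_const c_def mult.commute order_trans)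
  have "\<EE> (\<lambda>\<sigma>. f (\<sigma> []) * (gibbs ^^ m) \<phi> \<sigma>) = \<EE> (\<lambda>\<sigma>. f (\<sigma> []) * g \<sigma> + c * f (\<sigma> []))"
    using gibbs_iter_add_const[of _ m "\<lambda>\<sigma>. \<phi> \<sigma> - c" c]
    by (intro mean_cong) (simp add: g_def algebra_simps)
  also have "\<dots> = \<EE> (\<lambda>\<sigma>. f (\<sigma> []) * g \<sigma>)"
    by (simp add: mean_add mean_cmult mean_root_function f_centred)
  finally have "\<bar>\<EE> (\<lambda>\<sigma>. f (\<sigma> []) * (gibbs ^^ m) \<phi> \<sigma>)\<bar> = \<bar>\<EE> (\<lambda>\<sigma>. f (\<sigma> []) * g \<sigma>)\<bar>"
    by simp
  also have "\<dots> \<le> \<EE> (\<lambda>\<sigma>. \<bar>f (\<sigma> []) * g \<sigma>\<bar>)"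
    by (rule abs_mean_le)
  also have "\<dots> \<le> \<EE> (\<lambda>\<sigma>. \<bar>g \<sigma>\<bar>)"
    using f_bound[OF configs_less[OF _ Nil_in_vertices]]
    by (intro mean_mono) (simp add: abs_mult mult_left_le_one_le)
  also have "\<dots> \<le> (t\<^sup>2 + \<EE> (\<lambda>\<sigma>. (g \<sigma>)\<^sup>2)) / (2 * t)"
    by (rule mean_abs_le_am_gm[OF t(1)])
  also have "\<dots> \<le> (t\<^sup>2 + 4 * t\<^sup>2) / (2 * t)"
    using g_sq t(1) by (intro divide_right_mono add_left_mono) auto
  also have "\<dots> = 5/2 * t"
    using t(1) by (simp add: power2_eq_square field_simps)
  finally show ?thesis unfolding t_def .
qed

lemma sum_influence_root_gibbs_iter_le:
  fixes c :: real
  assumes b: "1 \<le> b" and s_bound: "\<And>x. \<bar>s x\<bar> \<le> 1"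
    and m: "real m \<le> horizon_factor b * n * card V" and c: "c \<le> 1/2"
  shows "(\<Sum>j<m. influence [] ((gibbs ^^ j) (\<lambda>\<sigma>. s (restrict \<sigma> (level b n))))) / card V
           \<le> 4 * horizon_factor b * exp (- c * n)"
proof -
  let ?\<phi> = "\<lambda>\<sigma>. s (restrict \<sigma> (level b n))" and ?\<delta> = "horizon_factor b"
  have N: "real (card V) > 0" using card_vertices_pos by simp
  have "influence [] ((gibbs ^^ j) ?\<phi>) \<le> 2 * exp (- real n)" if "j < m" for j
  proof (rule influence_root_gibbs_iter_le[where s=s, OF b s_bound])
    show "real j \<le> ?\<delta> * n * card V"
      using that m by (meson less_imp_le of_nat_le_iff order_trans)
  qed
  then have "(\<Sum>j<m. influence [] ((gibbs ^^ j) ?\<phi>)) \<le> m * (2 * exp (- real n))"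
    using sum_bounded_above[of "{..<m}" "\<lambda>j. influence [] ((gibbs ^^ j) ?\<phi>)"] by simp
  also have "\<dots> \<le> ?\<delta> * n * card V * (2 * exp (- real n))"
    using m by (intro mult_right_mono) auto
  finally have "(\<Sum>j<m. influence [] ((gibbs ^^ j) ?\<phi>)) \<le> 2 * ?\<delta> * (n * exp (- real n)) * card V"
    by (simp add: mult_ac)
  then have "(\<Sum>j<m. influence [] ((gibbs ^^ j) ?\<phi>)) / card V \<le> 2 * ?\<delta> * (n * exp (- real n))"
    using N by (simp add: pos_divide_le_eq)
  also have "\<dots> \<le> 2 * ?\<delta> * (2 * exp (- c * n))"
  proof -
    have "c * n \<le> 1/2 * n" using c by (intro mult_right_mono) auto
    then have "exp (- real n / 2) \<le> exp (- c * n)" by simp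
    then have "n * exp (- real n) \<le> 2 * exp (- c * n)"
      using mult_exp_neg_le[of n] by linarith
    then show ?thesis using horizon_factor_pos[OF b] by simp
  qed
  finally show ?thesis by simp
qed

lemma abs_mean_root_leaf_le:
  assumes b: "1 \<le> b" and lam: "0 \<le> lam"
    and gap: "\<And>f. lam * tm_variance q M p b n f \<le> dirichlet_form q M p b n f"
    and f_bound: "\<And>i. i < q \<Longrightarrow> \<bar>f i\<bar> \<le> 1" and f_centred: "(\<Sum>i<q. p i * f i) = 0"
    and s_bound: "\<And>x. \<bar>s x\<bar> \<le> 1"
  shows "\<bar>\<EE> (\<lambda>\<sigma>. f (\<sigma> []) * s (restrict \<sigma> (level b n)))\<bar>
           \<le> (5/2 * exp (lam / 2) + 4 * horizon_factor b) * exp (- min (lam * horizon_factor b / 2) (1/2) * n)"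
proof -
  let ?\<phi> = "\<lambda>\<sigma>. s (restrict \<sigma> (level b n))"
  define \<delta> where "\<delta> = horizon_factor b"
  define c where "c = min (lam * \<delta> / 2) (1/2)"
  define m where "m = nat \<lfloor>\<delta> * n * card V\<rfloor>"
  have N: "real (card V) > 0" using card_vertices_pos by simp
  have m: "real m \<le> \<delta> * n * card V" "\<delta> * n * card V - 1 \<le> real m"
    unfolding m_def \<delta>_def using horizon_factor_pos[OF b] by (simp_all add: of_nat_nat)
  have "- lam * m / (2 * card V) \<le> - lam * (\<delta> * n * card V - 1) / (2 * card V)"
    using m(2) lam N by (intro divide_right_mono) (simp_all add: mult_left_mono)
  also have "\<dots> = - lam * \<delta> / 2 * n + lam / (2 * card V)"
    using N by (simp add: field_simps)
  also have "\<dots> \<le> - c * n + lam / 2"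
    using lam N by (intro add_mono mult_right_mono divide_left_mono) (auto simp: c_def)
  finally have "exp (- lam * m / (2 * card V)) \<le> exp (lam / 2) * exp (- c * n)"
    by (simp add: add.commute flip: exp_add)
  then have main: "\<bar>\<EE> (\<lambda>\<sigma>. f (\<sigma> []) * (gibbs ^^ m) ?\<phi> \<sigma>)\<bar> \<le> 5/2 * exp (lam / 2) * exp (- c * n)"
    using abs_mean_root_gibbs_iter_le[where \<phi>="?\<phi>" and m=m, OF gap f_bound f_centred] s_bound by simp
  have error: "(\<Sum>j<m. influence [] ((gibbs ^^ j) ?\<phi>)) / card V \<le> 4 * \<delta> * exp (- c * n)"
    unfolding \<delta>_def by (rule sum_influence_root_gibbs_iter_le[OF b s_bound m(1)[unfolded \<delta>_def]])
                         (simp add: c_def)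
  show ?thesis
    using abs_mean_root_gibbs_iter_diff_le[where f=f and g="?\<phi>" and m=m, OF f_bound] error main
    unfolding c_def \<delta>_def by (simp add: algebra_simps)
qed

end

section \<open>Mutual information and total variation\<close>

text \<open>Since \<open>joint_law i x = p i * P\<^sub>n\<^sup>i x\<close>, this is \<open>2 p\<^sub>i\<close> times the total variation distance
  between \<open>P\<^sub>n\<^sup>i\<close> and the law of \<open>\<sigma>\<^sub>n\<close>.\<close>
definition leaf_deviation :: "nat \<Rightarrow> (nat \<Rightarrow> nat \<Rightarrow> real) \<Rightarrow> (nat \<Rightarrow> real) \<Rightarrow> nat \<Rightarrow> nat \<Rightarrow> nat \<Rightarrow> real" where
  "leaf_deviation q M p b n i =
     (\<Sum>x\<in>leaf_configs q b n. \<bar>joint_law q M p b n i x - p i * leaf_law q M p b n x\<bar>)"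

lemma ln_ratio_term_le:
  fixes J Q r :: real
  assumes J: "0 \<le> J" "J \<le> Q" and r: "0 < r" "r \<le> 1"
  shows "(if J = 0 then 0 else J * ln (J / (r * Q))) \<le> \<bar>J - r * Q\<bar> / r + (J - r * Q)"
proof (cases "J = 0")
  case True
  then have "\<bar>J - r * Q\<bar> = r * Q" and "r * Q \<le> Q" using J r by (auto intro: mult_left_le_one_le)
  with True show ?thesis using r by (simp add: field_simps)
next
  case False
  define y where "y = J / (r * Q)"
  have pos: "0 < J" "0 < Q" using J False by auto
  have y: "0 < y" "y \<le> 1 / r" unfolding y_def using pos J r by (auto simp: field_simps)
  have "J * ln y \<le> J * (y - 1)" using ln_le_minus_one[OF y(1)] pos by simp
  also have "\<dots> = (J - r * Q) + (J - r * Q) * (y - 1)"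
    unfolding y_def using pos r by (simp add: field_simps)
  also have "(J - r * Q) * (y - 1) \<le> \<bar>J - r * Q\<bar> * (1 / r)"
  proof -
    have "1 \<le> 1 / r" using r by simp
    then have "\<bar>y - 1\<bar> \<le> 1 / r" using y by linarith
    then have "\<bar>J - r * Q\<bar> * \<bar>y - 1\<bar> \<le> \<bar>J - r * Q\<bar> * (1 / r)" by (intro mult_left_mono) auto
    then show ?thesis by (simp flip: abs_mult)
  qed
  finally show ?thesis using False unfolding y_def by simp
qed

context tree_process
begin

abbreviation "L \<equiv> level b n"

lemma finite_leaf_configs: "finite (leaf_configs q b n)"
  using finite_subset[OF level_subset_vertices finite_vertices]
  unfolding leaf_configs_def by (intro finite_PiE) auto

lemma restrict_in_leaf_configs: "\<sigma> \<in> \<Omega> \<Longrightarrow> restrict \<sigma> L \<in> leaf_configs q b n"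
  unfolding leaf_configs_def using level_subset_vertices configs_less by (auto simp: PiE_iff)

lemma sum_group_leaves:
  "(\<Sum>x\<in>leaf_configs q b n. \<Sum>\<sigma>\<in>{\<sigma>\<in>\<Omega>. restrict \<sigma> L = x}. F \<sigma>) = (\<Sum>\<sigma>\<in>\<Omega>. F \<sigma>)"
  by (rule sum.group[OF finite_configs finite_leaf_configs]) (auto simp: restrict_in_leaf_configs)

lemma joint_law_eq:
  "joint_law q M p b n i x = (\<Sum>\<sigma>\<in>{\<sigma>\<in>\<Omega>. restrict \<sigma> L = x}. if \<sigma> [] = i then \<mu> \<sigma> else 0)"
proof -
  have "{\<sigma>\<in>\<Omega>. \<sigma> [] = i \<and> restrict \<sigma> L = x} = {\<sigma>\<in>{\<sigma>\<in>\<Omega>. restrict \<sigma> L = x}. \<sigma> [] = i}" by auto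
  then show ?thesis unfolding joint_law_def using finite_configs by (simp add: sum.inter_filter if_if_eq_conj)
qed

lemma leaf_law_eq: "leaf_law q M p b n x = (\<Sum>\<sigma>\<in>{\<sigma>\<in>\<Omega>. restrict \<sigma> L = x}. \<mu> \<sigma>)"
proof -
  have "leaf_law q M p b n x = (\<Sum>\<sigma>\<in>{\<sigma>\<in>\<Omega>. restrict \<sigma> L = x}. \<Sum>i<q. if \<sigma> [] = i then \<mu> \<sigma> else 0)"
    unfolding leaf_law_def joint_law_eq by (rule sum.swap)
  also have "\<dots> = (\<Sum>\<sigma>\<in>{\<sigma>\<in>\<Omega>. restrict \<sigma> L = x}. \<mu> \<sigma>)"
    by (intro sum.cong refl) (simp add: configs_less Nil_in_vertices)
  finally show ?thesis .
qed

lemma joint_law_nonneg: "0 \<le> joint_law q M p b n i x"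
  unfolding joint_law_def by (intro sum_nonneg tree_measure_nonneg)

lemma joint_law_le_leaf_law: "i < q \<Longrightarrow> joint_law q M p b n i x \<le> leaf_law q M p b n x"
  unfolding leaf_law_def by (rule member_le_sum) (auto simp: joint_law_nonneg)

lemma root_law_eq: "i < q \<Longrightarrow> root_law q M p b n i = p i"
  unfolding root_law_def joint_law_eq sum_group_leaves
  using mean_root_function[of "\<lambda>j. if j = i then 1 else 0"]
  by (simp add: tm_mean_def if_distrib sum.delta cong: if_cong)

lemma leaf_deviation_eq_mean:
  fixes i :: nat
  defines "s \<equiv> \<lambda>x. sgn (joint_law q M p b n i x - p i * leaf_law q M p b n x)"
  shows "leaf_deviation q M p b n i
           = \<EE> (\<lambda>\<sigma>. ((if \<sigma> [] = i then 1 else 0) - p i) * s (restrict \<sigma> L))"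
proof -
  have "\<EE> (\<lambda>\<sigma>. ((if \<sigma> [] = i then 1 else 0) - p i) * s (restrict \<sigma> L))
      = (\<Sum>x\<in>leaf_configs q b n. \<Sum>\<sigma>\<in>{\<sigma>\<in>\<Omega>. restrict \<sigma> L = x}.
           s x * ((if \<sigma> [] = i then \<mu> \<sigma> else 0) - p i * \<mu> \<sigma>))"
    unfolding tm_mean_def sum_group_leaves[symmetric] by (intro sum.cong refl) (auto simp: algebra_simps)
  also have "\<dots> = (\<Sum>x\<in>leaf_configs q b n. s x * (joint_law q M p b n i x - p i * leaf_law q M p b n x))"
    unfolding joint_law_eq leaf_law_eq
    by (simp add: sum_distrib_left sum_subtractf right_diff_distrib)
  also have "\<dots> = leaf_deviation q M p b n i"
    unfolding leaf_deviation_def s_def by (simp add: abs_sgn mult.commute)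
  finally show ?thesis by simp
qed

lemma leaf_deviation_le:
  assumes b: "1 \<le> b" and lam: "0 \<le> lam"
    and gap: "\<And>f. lam * tm_variance q M p b n f \<le> dirichlet_form q M p b n f"
    and i: "i < q"
  shows "leaf_deviation q M p b n i
           \<le> (5/2 * exp (lam / 2) + 4 * horizon_factor b) * exp (- min (lam * horizon_factor b / 2) (1/2) * n)"
proof -
  have bound: "\<bar>(if j = i then 1 else 0) - p i\<bar> \<le> 1" for j
    using p_nonneg[OF i] p_le_1[OF i] by auto
  have "(\<Sum>j<q. p j * ((if j = i then 1 else 0) - p i)) = (\<Sum>j<q. (if j = i then p j else 0) - p j * p i)"
    by (intro sum.cong) (auto simp: right_diff_distrib)
  also have "\<dots> = p i - (\<Sum>j<q. p j) * p i"
    using i by (simp add: sum_subtractf sum_distrib_right)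
  finally have centred: "(\<Sum>j<q. p j * ((if j = i then 1 else 0) - p i)) = 0"
    using sum_p by simp
  have "\<bar>sgn (joint_law q M p b n i x - p i * leaf_law q M p b n x)\<bar> \<le> 1" for x
    by (simp add: abs_sgn_eq)
  from abs_mean_root_leaf_le[OF b lam gap bound centred this] show ?thesis
    unfolding leaf_deviation_eq_mean by (rule order_trans[OF abs_ge_self])
qed

lemma mutual_info_le_leaf_deviation:
  assumes p_pos: "\<And>i. i < q \<Longrightarrow> 0 < p i"
  shows "mutual_info q M p b n \<le> (\<Sum>i<q. leaf_deviation q M p b n i / p i)"
proof -
  let ?J = "joint_law q M p b n" and ?Q = "leaf_law q M p b n"
  have "(let J = ?J i x in if J = 0 then 0 else J * ln (J / (root_law q M p b n i * ?Q x)))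
      \<le> \<bar>?J i x - p i * ?Q x\<bar> / p i + (?J i x - p i * ?Q x)" if i: "i < q" for i x
    unfolding Let_def root_law_eq[OF i]
    by (rule ln_ratio_term_le[OF joint_law_nonneg joint_law_le_leaf_law[OF i] p_pos[OF i] p_le_1[OF i]])
  then have "mutual_info q M p b n
      \<le> (\<Sum>i<q. \<Sum>x\<in>leaf_configs q b n. \<bar>?J i x - p i * ?Q x\<bar> / p i + (?J i x - p i * ?Q x))"
    unfolding mutual_info_def by (intro sum_mono) auto
  also have "\<dots> = (\<Sum>i<q. leaf_deviation q M p b n i / p i)
      + (\<Sum>x\<in>leaf_configs q b n. \<Sum>i<q. ?J i x - p i * ?Q x)"
    unfolding leaf_deviation_def by (simp add: sum.distrib sum_divide_distrib sum.swap[of _ "{..<q}"])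
  also have "(\<Sum>x\<in>leaf_configs q b n. \<Sum>i<q. ?J i x - p i * ?Q x) = 0"
    by (simp add: sum_subtractf leaf_law_def sum_p flip: sum_distrib_right)
  finally show ?thesis by simp
qed

lemma tv_dist_le_leaf_deviation:
  assumes p_pos: "\<And>i. i < q \<Longrightarrow> 0 < p i" and i: "i < q" and j: "j < q"
  shows "tv_dist q M p b n i j \<le> (leaf_deviation q M p b n i / p i + leaf_deviation q M p b n j / p j) / 2"
proof -
  let ?J = "joint_law q M p b n" and ?Q = "leaf_law q M p b n"
  have cond: "\<bar>cond_leaf_law q M p b n k x - ?Q x\<bar> = \<bar>?J k x - p k * ?Q x\<bar> / p k" if "k < q" for k x
  proof -
    have "cond_leaf_law q M p b n k x - ?Q x = (?J k x - p k * ?Q x) / p k"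
      using p_pos[OF that] unfolding cond_leaf_law_def root_law_eq[OF that] by (simp add: field_simps)
    then show ?thesis using p_pos[OF that] by simp
  qed
  have "\<bar>cond_leaf_law q M p b n i x - cond_leaf_law q M p b n j x\<bar>
      \<le> \<bar>?J i x - p i * ?Q x\<bar> / p i + \<bar>?J j x - p j * ?Q x\<bar> / p j" for x
    unfolding cond[OF i, symmetric] cond[OF j, symmetric] by linarith
  then have "(\<Sum>x\<in>leaf_configs q b n. \<bar>cond_leaf_law q M p b n i x - cond_leaf_law q M p b n j x\<bar>)
      \<le> (\<Sum>x\<in>leaf_configs q b n. \<bar>?J i x - p i * ?Q x\<bar> / p i + \<bar>?J j x - p j * ?Q x\<bar> / p j)"
    by (rule sum_mono)
  then have "(\<Sum>x\<in>leaf_configs q b n. \<bar>cond_leaf_law q M p b n i x - cond_leaf_law q M p b n j x\<bar>)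
      \<le> leaf_deviation q M p b n i / p i + leaf_deviation q M p b n j / p j"
    unfolding leaf_deviation_def by (simp add: sum.distrib sum_divide_distrib)
  then show ?thesis
    unfolding tv_dist_def by simp
qed

text \<open>If every \<open>f\<close> has zero variance, \<open>spectral_gap\<close> is the junk value \<open>Inf {}\<close>; hence the
  lower bound \<open>min 0 (Inf {})\<close>.\<close>
lemma spectral_gap_lower_bound: "min 0 (Inf {}) \<le> spectral_gap q M p b k"
proof -
  let ?S = "{dirichlet_form q M p b k g / tm_variance q M p b k g | g. 0 < tm_variance q M p b k g}"
  have "0 \<le> Inf ?S" if "?S \<noteq> {}"
    using that tree_process.dirichlet_form_nonneg[OF tree_process_axioms] by (intro cInf_greatest) auto
  then show ?thesis unfolding spectral_gap_def by (cases "?S = {}") auto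
qed

lemma spectral_gap_inequality:
  "(INF k. spectral_gap q M p b k) * tm_variance q M p b n f \<le> dirichlet_form q M p b n f"
proof (cases "tm_variance q M p b n f = 0")
  case False
  let ?S = "{dirichlet_form q M p b n g / tm_variance q M p b n g | g. 0 < tm_variance q M p b n g}"
  have var: "0 < tm_variance q M p b n f" using False variance_nonneg[of f] by (simp add: order.strict_iff_order)
  have "bdd_below ?S"
    using dirichlet_form_nonneg by (intro bdd_belowI[where m=0]) auto
  then have "spectral_gap q M p b n \<le> dirichlet_form q M p b n f / tm_variance q M p b n f"
    unfolding spectral_gap_def using var by (intro cInf_lower) auto
  moreover have "(INF k. spectral_gap q M p b k) \<le> spectral_gap q M p b n"
    using spectral_gap_lower_bound by (intro cINF_lower bdd_belowI2) auto
  ultimately show ?thesis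
    using var by (simp add: pos_le_divide_eq) (meson less_imp_le mult_right_mono order_trans)
qed (simp add: dirichlet_form_nonneg)

end

section \<open>Exponential decay and non-reconstruction\<close>

lemma mpow_nonneg: "stochastic q M \<Longrightarrow> i < q \<Longrightarrow> j < q \<Longrightarrow> 0 \<le> mpow q M k i j"
  by (induction k arbitrary: j) (auto simp: stochastic_def intro!: sum_nonneg mult_nonneg_nonneg)

lemma stationary_dist_mpow:
  assumes "stationary_dist q M p" "j < q"
  shows "(\<Sum>i<q. p i * mpow q M k i j) = p j"
  using assms(2)
proof (induction k arbitrary: j)
  case 0
  have "(\<Sum>i<q. p i * mpow q M 0 i j) = (\<Sum>i<q. if i = j then p i else 0)"
    by (intro sum.cong) auto
  with 0 show ?case by (simp add: sum.delta)
next
  case (Suc k)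
  have "(\<Sum>i<q. p i * mpow q M (Suc k) i j) = (\<Sum>i<q. \<Sum>l<q. p i * mpow q M k i l * M l j)"
    by (simp add: sum_distrib_left mult.assoc)
  also have "\<dots> = (\<Sum>l<q. (\<Sum>i<q. p i * mpow q M k i l) * M l j)"
    by (subst sum.swap) (simp add: sum_distrib_right)
  also have "\<dots> = (\<Sum>l<q. p l * M l j)"
    using Suc.IH by (intro sum.cong) auto
  also have "\<dots> = p j"
    using assms(1) Suc.prems unfolding stationary_dist_def by simp
  finally show ?case .
qed

lemma stationary_dist_pos:
  assumes "stochastic q M" "irreducible_chain q M" "stationary_dist q M p" "j < q"
  shows "0 < p j"
proof -
  have "\<exists>i<q. 0 < p i"
  proof (rule ccontr)
    assume none: "\<not> (\<exists>i<q. 0 < p i)"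
    have "(\<Sum>i<q. p i) \<le> 0" by (rule sum_nonpos) (use none in force)
    with assms(3) show False unfolding stationary_dist_def by simp
  qed
  then obtain i where i: "i < q" "0 < p i" by blast
  obtain k where k: "0 < mpow q M k i j"
    using assms(2,4) i unfolding irreducible_chain_def by blast
  have "0 < p i * mpow q M k i j" using i k by simp
  also have "\<dots> \<le> (\<Sum>i<q. p i * mpow q M k i j)"
    using i assms mpow_nonneg unfolding stationary_dist_def
    by (intro member_le_sum mult_nonneg_nonneg) auto
  also have "\<dots> = p j" by (rule stationary_dist_mpow[OF assms(3,4)])
  finally show ?thesis .
qed

lemma tree_process_if_stationary: "stochastic q M \<Longrightarrow> stationary_dist q M p \<Longrightarrow> tree_process q M p"
  unfolding stationary_dist_def by unfold_locales auto

lemma leaf_deviation_exp_decay: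
  assumes tp: "tree_process q M p" and b: "1 \<le> b" and gap: "0 < (INF n. spectral_gap q M p b n)"
  obtains K c where "0 < K" "0 < c"
    and "\<And>n i. i < q \<Longrightarrow> leaf_deviation q M p b n i \<le> K * exp (- c * real n)"
proof
  let ?lam = "INF n. spectral_gap q M p b n"
  show "0 < 5/2 * exp (?lam / 2) + 4 * horizon_factor b"
    using horizon_factor_pos[OF b] by (intro add_pos_pos) auto
  show "0 < min (?lam * horizon_factor b / 2) (1/2)"
    using gap horizon_factor_pos[OF b] by simp
  show "leaf_deviation q M p b n i
      \<le> (5/2 * exp (?lam / 2) + 4 * horizon_factor b) * exp (- min (?lam * horizon_factor b / 2) (1/2) * n)"
    if "i < q" for n i
    using tree_process.leaf_deviation_le[OF tp b _ tree_process.spectral_gap_inequality[OF tp] that] gap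
    by simp
qed

lemma mutual_info_exp_decay:
  assumes tp: "tree_process q M p" and p_pos: "\<And>i. i < q \<Longrightarrow> 0 < p i" and K: "0 < K"
    and decay: "\<And>n i. i < q \<Longrightarrow> leaf_deviation q M p b n i \<le> K * exp (- c * real n)"
  shows "\<exists>C>0. \<forall>n. mutual_info q M p b n \<le> C * exp (- c * real n)"
proof (intro exI conjI allI)
  have "0 < q" using tree_process.q_pos[OF tp] .
  then show "0 < (\<Sum>i<q. 1 / p i) * K"
    using p_pos K by (intro mult_pos_pos sum_pos) auto
  show "mutual_info q M p b n \<le> (\<Sum>i<q. 1 / p i) * K * exp (- c * real n)" for n
  proof -
    have "mutual_info q M p b n \<le> (\<Sum>i<q. leaf_deviation q M p b n i / p i)"
      by (rule tree_process.mutual_info_le_leaf_deviation[OF tp p_pos])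
    also have "\<dots> \<le> (\<Sum>i<q. K * exp (- c * real n) / p i)"
      using decay p_pos by (intro sum_mono divide_right_mono) (auto simp: less_imp_le)
    finally show ?thesis by (simp add: sum_distrib_right sum_divide_distrib)
  qed
qed

lemma not_reconstruction_solvable:
  assumes tp: "tree_process q M p" and p_pos: "\<And>i. i < q \<Longrightarrow> 0 < p i" and c: "0 < c"
    and decay: "\<And>n i. i < q \<Longrightarrow> leaf_deviation q M p b n i \<le> K * exp (- c * real n)"
  shows "\<not> reconstruction_solvable q M p b"
proof
  assume "reconstruction_solvable q M p b"
  then obtain i j L where ij: "i < q" "j < q" and L: "0 < L"
    and lim: "(\<lambda>n. tv_dist q M p b n i j) \<longlonglongrightarrow> L"
    unfolding reconstruction_solvable_def by blast
  define B where "B = (1 / p i + 1 / p j) / 2 * K"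
  have upper: "tv_dist q M p b n i j \<le> B * exp (- c * real n)" for n
  proof -
    have "tv_dist q M p b n i j \<le> (leaf_deviation q M p b n i / p i + leaf_deviation q M p b n j / p j) / 2"
      by (rule tree_process.tv_dist_le_leaf_deviation[OF tp p_pos ij])
    also have "\<dots> \<le> (K * exp (- c * real n) / p i + K * exp (- c * real n) / p j) / 2"
      using decay[OF ij(1)] decay[OF ij(2)] p_pos[OF ij(1)] p_pos[OF ij(2)]
      by (intro divide_right_mono add_mono) auto
    finally show ?thesis unfolding B_def by (simp add: field_simps)
  qed
  have lower: "0 \<le> tv_dist q M p b n i j" for n
    unfolding tv_dist_def by (intro mult_nonneg_nonneg sum_nonneg) auto
  have bound_lim: "(\<lambda>n. B * exp (- c * real n)) \<longlonglongrightarrow> 0"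
  proof -
    have "exp (- c * real n) = exp (- c) ^ n" for n
      using exp_of_nat_mult[of n "- c"] by (simp add: mult.commute)
    moreover have "(\<lambda>n. exp (- c) ^ n) \<longlonglongrightarrow> 0"
      using c by (intro LIMSEQ_power_zero) simp
    ultimately show ?thesis using tendsto_mult_right_zero[of "\<lambda>n. exp (- c) ^ n" sequentially B] by simp
  qed
  have "(\<lambda>n. tv_dist q M p b n i j) \<longlonglongrightarrow> 0"
    using lower upper by (intro tendsto_sandwich[OF always_eventually always_eventually tendsto_const bound_lim]) auto
  with L show False using LIMSEQ_unique[OF lim] by simp
qed

theorem theorem6p4:
  fixes q b :: nat and M :: "nat \<Rightarrow> nat \<Rightarrow> real" and p :: "nat \<Rightarrow> real"
  assumes "1 \<le> b"
    and "ergodic_channel q M"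
    and "stationary_dist q M p"
    and "(INF n. spectral_gap q M p b n) > 0"
  shows "(\<exists>C>0. \<exists>c>0. \<forall>n. mutual_info q M p b n \<le> C * exp (- c * real n))
         \<and> \<not> reconstruction_solvable q M p b"
proof -
  have stochastic: "stochastic q M" and irreducible: "irreducible_chain q M"
    using assms(2) unfolding ergodic_channel_def by auto
  have tp: "tree_process q M p" using tree_process_if_stationary[OF stochastic assms(3)] .
  have p_pos: "\<And>i. i < q \<Longrightarrow> 0 < p i" using stationary_dist_pos[OF stochastic irreducible assms(3)] .
  obtain K c where K: "0 < K" and c: "0 < c"
    and decay: "\<And>n i. i < q \<Longrightarrow> leaf_deviation q M p b n i \<le> K * exp (- c * real n)"
    using leaf_deviation_exp_decay[OF tp assms(1,4)] by blast
  show ?thesis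
    using mutual_info_exp_decay[OF tp p_pos K decay] not_reconstruction_solvable[OF tp p_pos c decay] c
    by blast
qed

end
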